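(* Let $W\in\mathbb{C}[x_1,\dots,x_n]$ be a nondegenerate quasihomogeneous polynomial and $G$ a finite subgroup of $G_W$. Then $P(W,G;u,v)=P(W,G;v,u)$; equivalently $h^{p,q}(W,G)=h^{q,p}(W,G)$ for all $p,q\in\mathbb{Q}$.
   Context: Setting: $W$ quasihomogeneous with positive integers $w_i,d$, $W(\lambda^{w_1}x_1,\dots,\lambda^{w_n}x_n)=\lambda^dW$, charges $q_i=w_i/d$; nondegenerate means $\mathbb{C}[x]/(\partial_iW)$ is finite dimensional; $\operatorname{charge}(f)$ is the charge-weighted degree. $\mathrm{GL}_n(\mathbb{C})$ acts on $V=\bigoplus\mathbb{C}x_i$ by $g\cdot x_i=\sum_jg_{ij}x_j$ and on polynomials by substitution. $G_W=\{g: g\cdot W=W,\ g_{ij}=0 \text{ if } w_i\neq w_j\}$. $\operatorname{age}(g)=\frac1{2\pi i}\sum\log\lambda_k$ over eigenvalues of $g$, $\log z\in2\pi i[0,1)$ for $|z|=1$. For $g\in G$: eigenbasis $y_1,\dots,y_n$ of $g$ with eigenvalues $\lambda_i$, $y_i$ of charge $q_i$; $V^g=\ker(E_n-g)$, $n_g=\dim V^g$, $I^g=\{i:\lambda_i=1\}=\{i_1,\dots,i_{n_g}\}$, $R^g=\mathbb{C}[y_i:i\in I^g]$, $W^g$ = $W$ in the $y$'s with $y_i=0$ for $i\notin I^g$, $I_{\nabla W^g}=(\partial W^g/\partial y_i)_{i\in I^g}$; $C_G(g)$ acts via restriction to $V^g$. $\Omega_g=\mathbb{C}\,dy_{i_1}\wedge\dots\wedge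 dy_{i_{n_g}}$ with $h$ acting by $\det(h|_{V^g})$; if $n_g=0$ all are trivial modules $\mathbb{C}$. $\mathcal{Q}_{W,g}=R^g/I_{\nabla W^g}\otimes\Omega_g$, with left charge $\operatorname{charge}(f)+\operatorname{age}(g)-\sum_{\lambda_i\ne1}q_i$ and right charge $\operatorname{charge}(f)+\operatorname{age}(g^{-1})-\sum_{\lambda_i\ne1}q_i$; $\mathscr{H}_{W,G,g}=\mathcal{Q}_{W,g}^{C_G(g)}$. $\mathscr{H}_{W,G}=\bigoplus_{g\in S}\mathscr{H}_{W,G,g}$ over a set $S$ of conjugacy class representatives; $h^{p,q}(W,G)=\dim\mathscr{H}^{p,q}_{W,G}$ and $P(W,G;u,v)=\sum_{p,q\in\mathbb{Q}}h^{p,q}(W,G)u^pv^q$. *)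

theory Defs
  imports "HOL-Library.Function_Algebras" "HOL-Analysis.Complex_Transcendental"
    "Jordan_Normal_Form.Char_Poly" "Jordan_Normal_Form.Determinant"
begin

text \<open>Points of the affine space are vectors \<open>nat \<Rightarrow> complex\<close>; polynomials over \<open>\<complex>\<close>
  are represented by their polynomial functions (over the infinite field \<open>\<complex>\<close> this is
  the polynomial ring).\<close>

definition poly_fun :: "nat set \<Rightarrow> ((nat \<Rightarrow> complex) \<Rightarrow> complex) \<Rightarrow> bool" where
  "poly_fun I f \<longleftrightarrow> (\<exists>M c. finite M \<and> (\<forall>m\<in>M. \<forall>i. i \<notin> I \<longrightarrow> m i = 0) \<and>
      f = (\<lambda>a. \<Sum>m\<in>M. c m * (\<Prod>i\<in>I. a i ^ m i)))"

definition pderiv_var :: "nat \<Rightarrow> ((nat \<Rightarrow> complex) \<Rightarrow> complex) \<Rightarrow> (nat \<Rightarrow> complex) \<Rightarrow> complex" where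
  "pderiv_var i F a = deriv (\<lambda>t. F (a(i := t))) (a i)"

definition jac_ideal :: "nat set \<Rightarrow> ((nat \<Rightarrow> complex) \<Rightarrow> complex) \<Rightarrow> ((nat \<Rightarrow> complex) \<Rightarrow> complex) set" where
  "jac_ideal I F = {f. \<exists>r. (\<forall>i\<in>I. poly_fun I (r i)) \<and>
      f = (\<lambda>a. \<Sum>i\<in>I. r i a * pderiv_var i F a)}"

definition fscale :: "complex \<Rightarrow> ((nat \<Rightarrow> complex) \<Rightarrow> complex) \<Rightarrow> ((nat \<Rightarrow> complex) \<Rightarrow> complex)" where
  "fscale c f = (\<lambda>a. c * f a)"

definition cdim :: "((nat \<Rightarrow> complex) \<Rightarrow> complex) set \<Rightarrow> nat" where
  "cdim S = vector_space.dim fscale S"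

text \<open>Nondegeneracy: \<open>\<complex>[x_1,\<dots>,x_n]/(\<partial>_i W)\<close> is finite dimensional, i.e. spanned by the
  classes of finitely many polynomials.\<close>
definition nondegenerate :: "nat \<Rightarrow> ((nat \<Rightarrow> complex) \<Rightarrow> complex) \<Rightarrow> bool" where
  "nondegenerate n W \<longleftrightarrow> (\<exists>B. finite B \<and> (\<forall>b\<in>B. poly_fun {..<n} b) \<and>
      (\<forall>f. poly_fun {..<n} f \<longrightarrow>
         (\<exists>c. (\<lambda>a. f a - (\<Sum>b\<in>B. c b * b a)) \<in> jac_ideal {..<n} W)))"

definition wscale :: "(nat \<Rightarrow> nat) \<Rightarrow> complex \<Rightarrow> (nat \<Rightarrow> complex) \<Rightarrow> (nat \<Rightarrow> complex)" where
  "wscale w l a = (\<lambda>i. l ^ w i * a i)"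

definition whom :: "(nat \<Rightarrow> nat) \<Rightarrow> nat \<Rightarrow> ((nat \<Rightarrow> complex) \<Rightarrow> complex) \<Rightarrow> bool" where
  "whom w k f \<longleftrightarrow> (\<forall>l a. f (wscale w l a) = l ^ k * f a)"

definition quasihomogeneous :: "nat \<Rightarrow> (nat \<Rightarrow> nat) \<Rightarrow> nat \<Rightarrow> ((nat \<Rightarrow> complex) \<Rightarrow> complex) \<Rightarrow> bool" where
  "quasihomogeneous n w d W \<longleftrightarrow> poly_fun {..<n} W \<and> (\<forall>i<n. 0 < w i) \<and> 0 < d \<and> whom w d W"

text \<open>A function is homogeneous of charge \<open>c\<close> (charge = weighted degree / \<open>d\<close>); \<open>0\<close> has every charge.\<close>
definition has_charge :: "(nat \<Rightarrow> nat) \<Rightarrow> nat \<Rightarrow> real \<Rightarrow> ((nat \<Rightarrow> complex) \<Rightarrow> complex) \<Rightarrow> bool" where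
  "has_charge w d c f \<longleftrightarrow> f = (\<lambda>_. 0) \<or> (\<exists>k::nat. real k = c * real d \<and> whom w k f)"

text \<open>Linear action of an \<open>n \<times> n\<close> matrix: \<open>g\<cdot>x_i = \<Sum>_j g_{ij} x_j\<close>, so
  \<open>(g\<cdot>f)(a) = f(g a)\<close>.\<close>
definition mact :: "nat \<Rightarrow> complex mat \<Rightarrow> (nat \<Rightarrow> complex) \<Rightarrow> (nat \<Rightarrow> complex)" where
  "mact n g a = (\<lambda>i. if i < n then (\<Sum>j<n. g $$ (i, j) * a j) else 0)"

definition G_W :: "nat \<Rightarrow> (nat \<Rightarrow> nat) \<Rightarrow> ((nat \<Rightarrow> complex) \<Rightarrow> complex) \<Rightarrow> complex mat set" where
  "G_W n w W = {g. g \<in> carrier_mat n n \<and> invertible_mat g \<and> (\<forall>a. W (mact n g a) = W a) \<and>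
      (\<forall>i<n. \<forall>j<n. w i \<noteq> w j \<longrightarrow> g $$ (i, j) = 0)}"

definition finite_mat_group :: "nat \<Rightarrow> complex mat set \<Rightarrow> bool" where
  "finite_mat_group n G \<longleftrightarrow> finite G \<and> G \<subseteq> carrier_mat n n \<and> 1\<^sub>m n \<in> G \<and>
     (\<forall>g\<in>G. \<forall>h\<in>G. g * h \<in> G) \<and> (\<forall>g\<in>G. \<exists>h\<in>G. g * h = 1\<^sub>m n)"

definition ginv :: "nat \<Rightarrow> complex mat set \<Rightarrow> complex mat \<Rightarrow> complex mat" where
  "ginv n G g = (THE h. h \<in> G \<and> g * h = 1\<^sub>m n)"

definition centralizer :: "complex mat set \<Rightarrow> complex mat \<Rightarrow> complex mat set" where
  "centralizer G g = {h \<in> G. h * g = g * h}"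

text \<open>Age: \<open>\<Sum> log \<lambda>_k / 2\<pi>i\<close> over the eigenvalues with (algebraic) multiplicity,
  \<open>log z \<in> 2\<pi>i[0,1)\<close> on the unit circle.\<close>
definition age :: "complex mat \<Rightarrow> real" where
  "age g = (\<Sum>l\<in>{l. poly (char_poly g) l = 0}.
              real (order l (char_poly g)) * frac (Arg l / (2 * pi)))"

text \<open>Eigendata of \<open>g\<close>: \<open>y_i = \<Sum>_j P_{ij} x_j\<close> with \<open>g\<cdot>y_i = \<lambda>_i y_i\<close> (i.e. \<open>P g = diag(\<lambda>) P\<close>),
  \<open>Q = P^{-1}\<close>, and \<open>y_i\<close> of charge \<open>q_i\<close> (\<open>P_{ij} = 0\<close> unless \<open>w_i = w_j\<close>).\<close>
definition eigendata :: "nat \<Rightarrow> (nat \<Rightarrow> nat) \<Rightarrow> complex mat \<Rightarrow>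
    complex mat \<times> complex mat \<times> (nat \<Rightarrow> complex) \<Rightarrow> bool" where
  "eigendata n w g D \<longleftrightarrow> (case D of (P, Q, lam) \<Rightarrow>
     P \<in> carrier_mat n n \<and> Q \<in> carrier_mat n n \<and> P * Q = 1\<^sub>m n \<and> Q * P = 1\<^sub>m n \<and>
     P * g = mat n n (\<lambda>(i, j). if i = j then lam i else 0) * P \<and>
     (\<forall>i<n. \<forall>j<n. w i \<noteq> w j \<longrightarrow> P $$ (i, j) = 0))"

definition eig :: "nat \<Rightarrow> (nat \<Rightarrow> nat) \<Rightarrow> complex mat \<Rightarrow> complex mat \<times> complex mat \<times> (nat \<Rightarrow> complex)" where
  "eig n w g = (SOME D. eigendata n w g D)"

definition eigP where "eigP n w g = fst (eig n w g)"
definition eigQ where "eigQ n w g = fst (snd (eig n w g))"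
definition eiglam where "eiglam n w g = snd (snd (eig n w g))"

definition fixidx :: "nat \<Rightarrow> (nat \<Rightarrow> nat) \<Rightarrow> complex mat \<Rightarrow> nat set" where
  "fixidx n w g = {i. i < n \<and> eiglam n w g i = 1}"

text \<open>\<open>W^g\<close>: \<open>W\<close> written in the \<open>y\<close>-coordinates (\<open>x = Q y\<close>) with \<open>y_i = 0\<close> for \<open>i \<notin> I^g\<close>.\<close>
definition Wfix :: "nat \<Rightarrow> (nat \<Rightarrow> nat) \<Rightarrow> ((nat \<Rightarrow> complex) \<Rightarrow> complex) \<Rightarrow> complex mat \<Rightarrow>
    (nat \<Rightarrow> complex) \<Rightarrow> complex" where
  "Wfix n w W g b = W (mact n (eigQ n w g) (\<lambda>i. if i \<in> fixidx n w g then b i else 0))"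

text \<open>Action of \<open>h \<in> C_G(g)\<close> on \<open>R^g\<close> (restriction to \<open>V^g\<close>, in the \<open>y\<close>-basis: matrix
  \<open>P h P^{-1}\<close>) and \<open>det(h|_{V^g})\<close>.\<close>
definition ymat :: "nat \<Rightarrow> (nat \<Rightarrow> nat) \<Rightarrow> complex mat \<Rightarrow> complex mat \<Rightarrow> complex mat" where
  "ymat n w g h = eigP n w g * h * eigQ n w g"

definition det_fix :: "nat \<Rightarrow> (nat \<Rightarrow> nat) \<Rightarrow> complex mat \<Rightarrow> complex mat \<Rightarrow> complex" where
  "det_fix n w g h = (let I = sorted_list_of_set (fixidx n w g); k = length I in
     det (mat k k (\<lambda>(a, b). ymat n w g h $$ (I ! a, I ! b))))"

definition shift :: "nat \<Rightarrow> (nat \<Rightarrow> nat) \<Rightarrow> nat \<Rightarrow> complex mat \<Rightarrow> real" where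
  "shift n w d g = (\<Sum>i\<in>{i. i < n \<and> eiglam n w g i \<noteq> 1}. real (w i) / real d)"

text \<open>Charge-\<open>c\<close> part of \<open>R^g\<close>, of the Jacobian ideal, and the preimage of the
  \<open>C_G(g)\<close>-invariants of \<open>\<Q>_{W,g} = R^g/I_{\<nabla>W^g} \<otimes> \<Omega>_g\<close>.\<close>
definition Rc where
  "Rc n w d g c = {f. poly_fun (fixidx n w g) f \<and> has_charge w d c f}"

definition Jc where
  "Jc n w d W g c = Rc n w d g c \<inter> jac_ideal (fixidx n w g) (Wfix n w W g)"

definition InvPre where
  "InvPre n w d W G g c = {f \<in> Rc n w d g c. \<forall>h\<in>centralizer G g.
      (\<lambda>b. det_fix n w g h * f (mact n (ymat n w g h) b) - f b)
        \<in> jac_ideal (fixidx n w g) (Wfix n w W g)}"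

text \<open>\<open>dim (\<Q>_{W,g})^{C_G(g)}\<close> in (left) charge coming from polynomial charge \<open>c\<close>.\<close>
definition Hdim where
  "Hdim n w d W G g c = cdim (InvPre n w d W G g c) - cdim (Jc n w d W g c)"

definition conj_reps :: "nat \<Rightarrow> complex mat set \<Rightarrow> complex mat set \<Rightarrow> bool" where
  "conj_reps n G S \<longleftrightarrow> S \<subseteq> G \<and>
     (\<forall>g\<in>G. \<exists>!s. s \<in> S \<and> (\<exists>k\<in>G. g = k * s * ginv n G k))"

text \<open>\<open>h^{p,q}(W,G)\<close>: element \<open>f \<otimes> \<omega>\<close> in sector \<open>g\<close> with \<open>charge f = c\<close> has left charge
  \<open>c + age g - shift\<close> and right charge \<open>c + age g\<^sup>-\<^sup>1 - shift\<close>.\<close>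
definition hpq :: "nat \<Rightarrow> (nat \<Rightarrow> nat) \<Rightarrow> nat \<Rightarrow> ((nat \<Rightarrow> complex) \<Rightarrow> complex) \<Rightarrow>
    complex mat set \<Rightarrow> real \<Rightarrow> real \<Rightarrow> nat" where
  "hpq n w d W G p q = (\<Sum>g\<in>(SOME S. conj_reps n G S).
     (if q - p = age (ginv n G g) - age g
      then Hdim n w d W G g (p - age g + shift n w d g) else 0))"

end

theory Submission
  imports Defs "Jordan_Normal_Form.Jordan_Normal_Form_Existence"
begin

text \<open>In the paper, \<open>h\<^sup>p\<^sup>,\<^sup>q = h\<^sup>q\<^sup>,\<^sup>p\<close> holds because \<open>g\<close> and \<open>g\<^sup>-\<^sup>1\<close> have the same fixed
  space, so their sectors agree while the ages \<open>age g\<close> and \<open>age g\<^sup>-\<^sup>1\<close> are exchanged between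
  left and right charges.  Here each sector is computed in an eigenbasis chosen for its own
  conjugacy class representative, so we prove that the sector data of \<open>g\<close> (the invariant
  quotient dimensions in each charge, the shift and the age of the inverse) coincide with
  those of every conjugate \<open>k g\<^sup>-\<^sup>1 k\<^sup>-\<^sup>1\<close>: the eigenbases of the two elements are related by an
  explicit linear substitution preserving weights, fixed coordinates, Jacobian ideals and
  the determinant characters.  The involution sending a representative \<open>s\<close> to the
  representative of the class of \<open>s\<^sup>-\<^sup>1\<close> then exchanges \<open>p\<close> and \<open>q\<close> in the sum defining
  \<open>h\<^sup>p\<^sup>,\<^sup>q\<close>.\<close>

section \<open>Polynomial functions\<close>

definition monomial :: "nat set \<Rightarrow> (nat \<Rightarrow> nat) \<Rightarrow> (nat \<Rightarrow> complex) \<Rightarrow> complex" where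
  "monomial I m a = (\<Prod>i\<in>I. a i ^ m i)"

lemma poly_fun_iff_monomials:
  "poly_fun I f \<longleftrightarrow> (\<exists>M c. finite M \<and> (\<forall>m\<in>M. \<forall>i. i \<notin> I \<longrightarrow> m i = 0) \<and>
      f = (\<lambda>a. \<Sum>m\<in>M. c m * monomial I m a))"
  unfolding poly_fun_def monomial_def by simp

lemma monomial_add: "monomial I (\<lambda>i. m1 i + m2 i) a = monomial I m1 a * monomial I m2 a"
  unfolding monomial_def by (simp add: power_add prod.distrib)

lemma poly_fun_const: "poly_fun I (\<lambda>_. c)"
  unfolding poly_fun_iff_monomials
  by (rule exI[of _ "{\<lambda>_. 0}"], rule exI[of _ "\<lambda>_. c"], auto simp: monomial_def)

lemma poly_fun_var:
  assumes "finite I" "i \<in> I"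
  shows "poly_fun I (\<lambda>a. a i)"
proof -
  let ?e = "\<lambda>j. if j = i then 1 else 0 :: nat"
  have "monomial I ?e a = a i" for a
  proof -
    have "monomial I ?e a = (\<Prod>j\<in>I. if j = i then a j else 1)"
      unfolding monomial_def by (rule prod.cong) auto
    also have "\<dots> = a i" using assms by (simp add: prod.delta')
    finally show ?thesis .
  qed
  then show ?thesis unfolding poly_fun_iff_monomials
    by (intro exI[of _ "{?e}"] exI[of _ "\<lambda>_. 1"]) (use assms in auto)
qed

lemma poly_fun_add:
  assumes "poly_fun I f" "poly_fun I g"
  shows "poly_fun I (\<lambda>a. f a + g a)"
proof -
  obtain M1 c1 where 1: "finite M1" "\<forall>m\<in>M1. \<forall>i. i \<notin> I \<longrightarrow> m i = 0"
      "f = (\<lambda>a. \<Sum>m\<in>M1. c1 m * monomial I m a)"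
    using assms(1) unfolding poly_fun_iff_monomials by blast
  obtain M2 c2 where 2: "finite M2" "\<forall>m\<in>M2. \<forall>i. i \<notin> I \<longrightarrow> m i = 0"
      "g = (\<lambda>a. \<Sum>m\<in>M2. c2 m * monomial I m a)"
    using assms(2) unfolding poly_fun_iff_monomials by blast
  let ?c = "\<lambda>m. (if m \<in> M1 then c1 m else 0) + (if m \<in> M2 then c2 m else 0)"
  have "(\<lambda>a. f a + g a) = (\<lambda>a. \<Sum>m\<in>M1 \<union> M2. ?c m * monomial I m a)"
  proof
    fix a
    have "(\<Sum>m\<in>M1 \<union> M2. ?c m * monomial I m a) =
        (\<Sum>m\<in>M1 \<union> M2. if m \<in> M1 then c1 m * monomial I m a else 0) +
        (\<Sum>m\<in>M1 \<union> M2. if m \<in> M2 then c2 m * monomial I m a else 0)"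
      by (simp only: sum.distrib[symmetric]) (rule sum.cong, simp, simp add: distrib_right)
    also have "\<dots> = f a + g a"
      using 1 2 by (simp add: sum.If_cases Int_absorb1)
    finally show "f a + g a = (\<Sum>m\<in>M1 \<union> M2. ?c m * monomial I m a)" by simp
  qed
  moreover have "\<forall>m\<in>M1 \<union> M2. \<forall>i. i \<notin> I \<longrightarrow> m i = 0" using 1 2 by auto
  ultimately show ?thesis unfolding poly_fun_iff_monomials
    by (intro exI[of _ "M1 \<union> M2"] exI[of _ ?c] conjI) (use 1(1) 2(1) in auto)
qed

lemma poly_fun_mult:
  assumes "poly_fun I f" "poly_fun I g"
  shows "poly_fun I (\<lambda>a. f a * g a)"
proof -
  obtain M1 c1 where 1: "finite M1" "\<forall>m\<in>M1. \<forall>i. i \<notin> I \<longrightarrow> m i = 0"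
      "f = (\<lambda>a. \<Sum>m\<in>M1. c1 m * monomial I m a)"
    using assms(1) unfolding poly_fun_iff_monomials by blast
  obtain M2 c2 where 2: "finite M2" "\<forall>m\<in>M2. \<forall>i. i \<notin> I \<longrightarrow> m i = 0"
      "g = (\<lambda>a. \<Sum>m\<in>M2. c2 m * monomial I m a)"
    using assms(2) unfolding poly_fun_iff_monomials by blast
  let ?s = "\<lambda>p. (\<lambda>i. fst p i + snd p i :: nat)"
  let ?c = "\<lambda>m. \<Sum>p\<in>{p\<in>M1 \<times> M2. ?s p = m}. c1 (fst p) * c2 (snd p)"
  have fin: "finite (M1 \<times> M2)" using 1 2 by auto
  have "(\<lambda>a. f a * g a) = (\<lambda>a. \<Sum>m\<in>?s ` (M1 \<times> M2). ?c m * monomial I m a)"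
  proof
    fix a
    have "(\<Sum>m\<in>?s ` (M1 \<times> M2). ?c m * monomial I m a) =
        (\<Sum>m\<in>?s ` (M1 \<times> M2). \<Sum>p\<in>{p\<in>M1 \<times> M2. ?s p = m}.
           c1 (fst p) * c2 (snd p) * monomial I (?s p) a)"
      by (simp add: sum_distrib_right)
    also have "\<dots> = (\<Sum>p\<in>M1 \<times> M2. c1 (fst p) * c2 (snd p) * monomial I (?s p) a)"
      using sum.group[OF fin finite_imageI[OF fin] subset_refl,
          of "\<lambda>p. c1 (fst p) * c2 (snd p) * monomial I (?s p) a" ?s] by simp
    also have "\<dots> = (\<Sum>p\<in>M1 \<times> M2. (c1 (fst p) * monomial I (fst p) a) * (c2 (snd p) * monomial I (snd p) a))"
      by (simp add: monomial_add mult_ac)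
    also have "\<dots> = f a * g a"
      unfolding 1(3) 2(3) by (simp add: sum_product sum.cartesian_product split_def)
    finally show "f a * g a = (\<Sum>m\<in>?s ` (M1 \<times> M2). ?c m * monomial I m a)" by simp
  qed
  moreover have "\<forall>m\<in>?s ` (M1 \<times> M2). \<forall>i. i \<notin> I \<longrightarrow> m i = 0" using 1 2 by auto
  ultimately show ?thesis unfolding poly_fun_iff_monomials
    by (intro exI[of _ "?s ` (M1 \<times> M2)"] exI[of _ ?c] conjI) (use fin in auto)
qed

inductive poly_term :: "nat set \<Rightarrow> ((nat \<Rightarrow> complex) \<Rightarrow> complex) \<Rightarrow> bool" for I where
  poly_term_const: "poly_term I (\<lambda>_. c)"
| poly_term_var: "i \<in> I \<Longrightarrow> poly_term I (\<lambda>a. a i)"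
| poly_term_add: "poly_term I f \<Longrightarrow> poly_term I g \<Longrightarrow> poly_term I (\<lambda>a. f a + g a)"
| poly_term_mult: "poly_term I f \<Longrightarrow> poly_term I g \<Longrightarrow> poly_term I (\<lambda>a. f a * g a)"

lemma poly_term_imp_poly_fun: "poly_term I f \<Longrightarrow> finite I \<Longrightarrow> poly_fun I f"
  by (induction rule: poly_term.induct) (auto intro: poly_fun_const poly_fun_var poly_fun_add poly_fun_mult)

lemma poly_term_sum:
  "finite X \<Longrightarrow> (\<And>x. x \<in> X \<Longrightarrow> poly_term I (f x)) \<Longrightarrow> poly_term I (\<lambda>a. \<Sum>x\<in>X. f x a)"
proof (induction X rule: finite_induct)
  case empty then show ?case using poly_term_const[of I 0] by simp
next
  case (insert x F) then show ?case using poly_term_add[of I "f x" "\<lambda>a. \<Sum>x\<in>F. f x a"] by simp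
qed

lemma poly_term_prod:
  "finite X \<Longrightarrow> (\<And>x. x \<in> X \<Longrightarrow> poly_term I (f x)) \<Longrightarrow> poly_term I (\<lambda>a. \<Prod>x\<in>X. f x a)"
proof (induction X rule: finite_induct)
  case empty then show ?case using poly_term_const[of I 1] by simp
next
  case (insert x F) then show ?case using poly_term_mult[of I "f x" "\<lambda>a. \<Prod>x\<in>F. f x a"] by simp
qed

lemma poly_term_power: "poly_term I f \<Longrightarrow> poly_term I (\<lambda>a. f a ^ k)"
  by (induction k) (auto intro: poly_term_const poly_term_mult)

lemma poly_fun_imp_poly_term:
  assumes "poly_fun I f"
  shows "poly_term I f"
proof -
  obtain M c where M: "finite M" "f = (\<lambda>a. \<Sum>m\<in>M. c m * monomial I m a)"
    using assms unfolding poly_fun_iff_monomials by blast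
  have "poly_term I (\<lambda>a. c m * monomial I m a)" for m
  proof (cases "finite I")
    case True
    show ?thesis unfolding monomial_def
      by (rule poly_term_mult[OF poly_term_const poly_term_prod[OF True]])
        (auto intro: poly_term_power poly_term_var)
  next
    case False
    then show ?thesis unfolding monomial_def using poly_term_const[of I "c m"] by simp
  qed
  then show ?thesis unfolding M(2) by (rule poly_term_sum[OF M(1)])
qed

lemma poly_fun_sum:
  "finite I \<Longrightarrow> finite X \<Longrightarrow> (\<And>x. x \<in> X \<Longrightarrow> poly_fun I (f x)) \<Longrightarrow> poly_fun I (\<lambda>a. \<Sum>x\<in>X. f x a)"
  by (rule poly_term_imp_poly_fun[OF poly_term_sum]) (auto intro: poly_fun_imp_poly_term)

lemma poly_fun_linear_form:
  assumes "finite I"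
  shows "poly_fun I (\<lambda>a. \<Sum>l\<in>I. c l * a l)"
  using assms by (intro poly_fun_sum poly_fun_mult poly_fun_const poly_fun_var)

lemma poly_fun_comp:
  assumes "finite I" "poly_fun J f" "\<And>j. j \<in> J \<Longrightarrow> poly_fun I (\<lambda>b. \<phi> b j)"
  shows "poly_fun I (\<lambda>b. f (\<phi> b))"
proof -
  have "poly_term J f" by (rule poly_fun_imp_poly_term[OF assms(2)])
  then have "poly_term I (\<lambda>b. f (\<phi> b))"
    by (induction rule: poly_term.induct) (auto intro: poly_term.intros poly_fun_imp_poly_term assms(3))
  then show ?thesis using poly_term_imp_poly_fun assms(1) by blast
qed

definition depends_only_on :: "nat set \<Rightarrow> ((nat \<Rightarrow> complex) \<Rightarrow> complex) \<Rightarrow> bool" where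
  "depends_only_on I f \<longleftrightarrow> (\<forall>a b. (\<forall>i\<in>I. a i = b i) \<longrightarrow> f a = f b)"

lemma poly_fun_depends_only_on: "poly_fun I f \<Longrightarrow> depends_only_on I f"
  unfolding poly_fun_iff_monomials depends_only_on_def monomial_def
  by (fastforce intro!: sum.cong prod.cong)

section \<open>Partial derivatives of polynomial functions\<close>

text \<open>\<^const>\<open>pderiv_var\<close> is defined through the one-variable \<^const>\<open>deriv\<close>, which carries no
  differentiability information.  For polynomials we establish the stronger statement that
  the restriction to every complex line is differentiable with the expected directional
  derivative; the chain rule for linear substitutions is the case of the lines through
  the columns of the substitution matrix.\<close>

definition has_line_derivatives :: "nat set \<Rightarrow> ((nat \<Rightarrow> complex) \<Rightarrow> complex) \<Rightarrow> bool" where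
  "has_line_derivatives I F \<longleftrightarrow> (\<forall>a v t. ((\<lambda>s. F (\<lambda>i. a i + s * v i)) has_field_derivative
     (\<Sum>i\<in>I. v i * pderiv_var i F (\<lambda>i. a i + t * v i))) (at t))"

lemma has_line_derivatives_pderiv:
  assumes "has_line_derivatives I F" "i \<in> I" "finite I"
  shows "((\<lambda>s. F (x(i := s))) has_field_derivative pderiv_var i F x) (at (x i))"
proof -
  let ?a = "x(i := 0)" and ?v = "\<lambda>j. if j = i then 1 else (0::complex)"
  have line: "(\<lambda>j. ?a j + s * ?v j) = x(i := s)" for s by auto
  have "((\<lambda>s. F (\<lambda>j. ?a j + s * ?v j)) has_field_derivative
      (\<Sum>j\<in>I. ?v j * pderiv_var j F (\<lambda>j. ?a j + x i * ?v j))) (at (x i))"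
    using assms(1)[unfolded has_line_derivatives_def, rule_format, of ?a ?v "x i"] .
  moreover have "(\<Sum>j\<in>I. ?v j * pderiv_var j F (x(i := x i))) = pderiv_var i F x"
  proof -
    have "?v j * pderiv_var j F x = (if j = i then pderiv_var i F x else 0)" for j by simp
    then show ?thesis using assms(2,3) by (simp add: sum.delta)
  qed
  ultimately show ?thesis unfolding line by simp
qed

lemma has_line_derivatives_const: "has_line_derivatives I (\<lambda>_. c)"
  unfolding has_line_derivatives_def pderiv_var_def by simp

lemma has_line_derivatives_var:
  assumes "finite I" "k \<in> I"
  shows "has_line_derivatives I (\<lambda>a. a k)"
proof -
  have pd: "pderiv_var i (\<lambda>a. a k) = (\<lambda>x. if i = k then 1 else 0)" for i
    unfolding pderiv_var_def by (cases "i = k") auto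
  show ?thesis unfolding has_line_derivatives_def pd using assms
    by (auto simp: if_distrib sum.delta cong: if_cong intro!: derivative_eq_intros)
qed

lemma has_line_derivatives_add:
  assumes "finite I" "has_line_derivatives I F" "has_line_derivatives I G"
  shows "has_line_derivatives I (\<lambda>a. F a + G a)"
  unfolding has_line_derivatives_def
proof (intro allI)
  fix a v :: "nat \<Rightarrow> complex" and t :: complex
  let ?p = "\<lambda>i. a i + t * v i"
  have pd: "pderiv_var i (\<lambda>a. F a + G a) x = pderiv_var i F x + pderiv_var i G x" if "i \<in> I" for i x
  proof -
    have "((\<lambda>s. F (x(i := s)) + G (x(i := s))) has_field_derivative
        pderiv_var i F x + pderiv_var i G x) (at (x i))"
      by (rule DERIV_add; rule has_line_derivatives_pderiv) (use assms that in auto)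
    then show ?thesis unfolding pderiv_var_def by (rule DERIV_imp_deriv)
  qed
  have "((\<lambda>s. F (\<lambda>i. a i + s * v i) + G (\<lambda>i. a i + s * v i)) has_field_derivative
      (\<Sum>i\<in>I. v i * pderiv_var i F ?p) + (\<Sum>i\<in>I. v i * pderiv_var i G ?p)) (at t)"
    by (rule DERIV_add) (use assms(2,3) in \<open>auto simp: has_line_derivatives_def\<close>)
  also have "(\<Sum>i\<in>I. v i * pderiv_var i F ?p) + (\<Sum>i\<in>I. v i * pderiv_var i G ?p)
      = (\<Sum>i\<in>I. v i * pderiv_var i (\<lambda>a. F a + G a) ?p)"
    unfolding sum.distrib[symmetric] by (rule sum.cong[OF refl]) (simp add: pd distrib_left)
  finally show "((\<lambda>s. F (\<lambda>i. a i + s * v i) + G (\<lambda>i. a i + s * v i)) has_field_derivative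
      (\<Sum>i\<in>I. v i * pderiv_var i (\<lambda>a. F a + G a) ?p)) (at t)" .
qed

lemma has_line_derivatives_mult:
  assumes "finite I" "has_line_derivatives I F" "has_line_derivatives I G"
  shows "has_line_derivatives I (\<lambda>a. F a * G a)"
  unfolding has_line_derivatives_def
proof (intro allI)
  fix a v :: "nat \<Rightarrow> complex" and t :: complex
  let ?p = "\<lambda>i. a i + t * v i"
  have pd: "pderiv_var i (\<lambda>a. F a * G a) x = pderiv_var i F x * G x + F x * pderiv_var i G x"
    if "i \<in> I" for i x
  proof -
    have dF: "((\<lambda>s. F (x(i := s))) has_field_derivative pderiv_var i F x) (at (x i))"
      and dG: "((\<lambda>s. G (x(i := s))) has_field_derivative pderiv_var i G x) (at (x i))"
      by (rule has_line_derivatives_pderiv; use assms that in auto)+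
    have "((\<lambda>s. F (x(i := s)) * G (x(i := s))) has_field_derivative
        pderiv_var i F x * G x + F x * pderiv_var i G x) (at (x i))"
      using DERIV_mult'[OF dF dG] by (simp add: mult_ac add_ac)
    then show ?thesis unfolding pderiv_var_def by (rule DERIV_imp_deriv)
  qed
  have dF: "((\<lambda>s. F (\<lambda>i. a i + s * v i)) has_field_derivative (\<Sum>i\<in>I. v i * pderiv_var i F ?p)) (at t)"
    and dG: "((\<lambda>s. G (\<lambda>i. a i + s * v i)) has_field_derivative (\<Sum>i\<in>I. v i * pderiv_var i G ?p)) (at t)"
    using assms(2,3) unfolding has_line_derivatives_def by blast+
  have "((\<lambda>s. F (\<lambda>i. a i + s * v i) * G (\<lambda>i. a i + s * v i)) has_field_derivative
      F ?p * (\<Sum>i\<in>I. v i * pderiv_var i G ?p) + (\<Sum>i\<in>I. v i * pderiv_var i F ?p) * G ?p) (at t)"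
    by (rule DERIV_mult'[OF dF dG])
  also have "F ?p * (\<Sum>i\<in>I. v i * pderiv_var i G ?p) + (\<Sum>i\<in>I. v i * pderiv_var i F ?p) * G ?p
      = (\<Sum>i\<in>I. v i * pderiv_var i (\<lambda>a. F a * G a) ?p)"
    unfolding sum_distrib_left sum_distrib_right sum.distrib[symmetric]
    by (rule sum.cong[OF refl]) (simp add: pd algebra_simps)
  finally show "((\<lambda>s. F (\<lambda>i. a i + s * v i) * G (\<lambda>i. a i + s * v i)) has_field_derivative
      (\<Sum>i\<in>I. v i * pderiv_var i (\<lambda>a. F a * G a) ?p)) (at t)" .
qed

lemma poly_fun_has_line_derivatives:
  assumes "finite I" "poly_fun I F"
  shows "has_line_derivatives I F"
  using poly_fun_imp_poly_term[OF assms(2)]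
  by (induction rule: poly_term.induct)
    (auto intro: has_line_derivatives_const has_line_derivatives_var
      has_line_derivatives_add has_line_derivatives_mult assms(1))

lemma mact_upd:
  assumes "j < n"
  shows "mact n L (b(j := t)) = (\<lambda>i. mact n L (b(j := 0)) i + t * (if i < n then L $$ (i, j) else 0))"
proof
  fix i
  show "mact n L (b(j := t)) i = mact n L (b(j := 0)) i + t * (if i < n then L $$ (i, j) else 0)"
  proof (cases "i < n")
    case True
    have "(\<Sum>l<n. L $$ (i, l) * (b(j := t)) l) =
        (\<Sum>l<n. L $$ (i, l) * (b(j := 0)) l + (if l = j then t * L $$ (i, j) else 0))"
      by (rule sum.cong) auto
    also have "\<dots> = (\<Sum>l<n. L $$ (i, l) * (b(j := 0)) l) + t * L $$ (i, j)"
      using assms by (simp add: sum.distrib)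
    finally show ?thesis using True unfolding mact_def by simp
  qed (simp add: mact_def)
qed

lemma pderiv_var_mact:
  assumes "finite J" "J \<subseteq> {..<n}" "poly_fun J F" "j < n"
  shows "pderiv_var j (\<lambda>b. F (mact n L b)) b = (\<Sum>i\<in>J. L $$ (i, j) * pderiv_var i F (mact n L b))"
proof -
  let ?a = "mact n L (b(j := 0))" and ?v = "\<lambda>i. if i < n then L $$ (i, j) else 0"
  have line: "(\<lambda>t. F (mact n L (b(j := t)))) = (\<lambda>s. F (\<lambda>i. ?a i + s * ?v i))"
    by (rule ext, subst mact_upd[OF assms(4)], rule refl)
  have "((\<lambda>s. F (\<lambda>i. ?a i + s * ?v i)) has_field_derivative
      (\<Sum>i\<in>J. ?v i * pderiv_var i F (\<lambda>i. ?a i + b j * ?v i))) (at (b j))"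
    using poly_fun_has_line_derivatives[OF assms(1,3), unfolded has_line_derivatives_def,
        rule_format, of ?a ?v "b j"] .
  moreover have "(\<lambda>i. ?a i + b j * ?v i) = mact n L b"
    using mact_upd[OF assms(4), of L b "b j"] by (simp del: fun_upd_apply)
  moreover have "(\<Sum>i\<in>J. ?v i * pderiv_var i F (mact n L b)) =
      (\<Sum>i\<in>J. L $$ (i, j) * pderiv_var i F (mact n L b))"
    using assms(2) by (intro sum.cong) auto
  ultimately have "((\<lambda>t. F (mact n L (b(j := t)))) has_field_derivative
      (\<Sum>i\<in>J. L $$ (i, j) * pderiv_var i F (mact n L b))) (at (b j))"
    unfolding line by simp
  then show ?thesis unfolding pderiv_var_def[of j] by (rule DERIV_imp_deriv)
qed

section \<open>Square matrices\<close>

lemma if_zero_mult: "(if P then x else 0) * y = (if P then x * y else (0 :: 'a :: mult_zero))"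
  by simp

lemma mult_if_zero: "x * (if P then y else 0) = (if P then x * y else (0 :: 'a :: mult_zero))"
  by simp

lemmas mat_entry_simps = scalar_prod_def atLeast0LessThan

text \<open>Fixing the dimension makes associativity of square matrices usable by the simplifier.\<close>

locale square_mat_dim =
  fixes n :: nat
begin

lemma assoc_mult_square_mat:
  "A \<in> carrier_mat n n \<Longrightarrow> B \<in> carrier_mat n n \<Longrightarrow> C \<in> carrier_mat n n \<Longrightarrow>
    A * B * C = A * (B * (C :: 'a :: semiring_1 mat))"
  by (rule assoc_mult_mat)

lemma mult_inverse_cancel_left:
  "A \<in> carrier_mat n n \<Longrightarrow> B \<in> carrier_mat n n \<Longrightarrow> C \<in> carrier_mat n n \<Longrightarrow>
    A * B = 1\<^sub>m n \<Longrightarrow> A * (B * C) = (C :: 'a :: semiring_1 mat)"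
  by (simp add: assoc_mult_square_mat[symmetric])

lemma mult_carrier_square_mat:
  "A \<in> carrier_mat n n \<Longrightarrow> B \<in> carrier_mat n n \<Longrightarrow> A * (B :: 'a :: semiring_1 mat) \<in> carrier_mat n n"
  by simp

lemma right_mult_one_square_mat: "A \<in> carrier_mat n n \<Longrightarrow> A * 1\<^sub>m n = (A :: 'a :: semiring_1 mat)"
  by simp

lemmas square_mat_simps = mult_carrier_square_mat
  assoc_mult_square_mat left_mult_one_mat right_mult_one_square_mat mult_inverse_cancel_left

lemma pow_mat_add: "(A :: 'a :: semiring_1 mat) \<in> carrier_mat n n \<Longrightarrow> A ^\<^sub>m (a + b) = A ^\<^sub>m a * A ^\<^sub>m b"
  by (induction b) (simp_all add: square_mat_simps)

lemma pow_mat_commute: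
  assumes "A \<in> carrier_mat n n" "B \<in> carrier_mat n n" "A * B = B * (A :: 'a :: semiring_1 mat)"
  shows "A ^\<^sub>m m * B = B * A ^\<^sub>m m"
proof (induction m)
  case (Suc m)
  have "A ^\<^sub>m Suc m * B = (A ^\<^sub>m m * B) * A" using assms by (simp add: square_mat_simps)
  then show ?case using assms Suc by (simp add: square_mat_simps)
qed (use assms in \<open>simp add: square_mat_simps\<close>)

lemma pow_mat_mult_commuting:
  assumes "A \<in> carrier_mat n n" "B \<in> carrier_mat n n" "A * B = B * (A :: 'a :: semiring_1 mat)"
  shows "(A * B) ^\<^sub>m m = A ^\<^sub>m m * B ^\<^sub>m m"
proof (induction m)
  case (Suc m)
  have "(A * B) ^\<^sub>m Suc m = A ^\<^sub>m m * (B ^\<^sub>m m * A) * B" using assms Suc by (simp add: square_mat_simps)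
  also have "\<dots> = A ^\<^sub>m m * (A * B ^\<^sub>m m) * B"
    using pow_mat_commute[OF assms(2,1) assms(3)[symmetric]] by simp
  finally show ?case using assms by (simp add: square_mat_simps)
qed (use assms in \<open>simp add: square_mat_simps\<close>)

lemma pow_mat_mult_exp_one:
  assumes "(A :: 'a :: semiring_1 mat) \<in> carrier_mat n n" "A ^\<^sub>m N = 1\<^sub>m n"
  shows "A ^\<^sub>m (N * K) = 1\<^sub>m n"
proof (induction K)
  case (Suc K)
  then show ?case
    using pow_mat_add[OF assms(1), of "N * K" N] assms by (simp add: add.commute)
qed (use assms in simp)

end

lemma mact_mult:
  assumes "A \<in> carrier_mat n n" "B \<in> carrier_mat n n"
  shows "mact n (A * B) a = mact n A (mact n B a)"
proof
  fix i show "mact n (A * B) a i = mact n A (mact n B a) i"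
  proof (cases "i < n")
    case True
    have "(\<Sum>j<n. (A * B) $$ (i, j) * a j) = (\<Sum>j<n. \<Sum>l<n. A $$ (i, l) * B $$ (l, j) * a j)"
      using assms True by (simp add: mat_entry_simps sum_distrib_right)
    also have "\<dots> = (\<Sum>l<n. A $$ (i, l) * (\<Sum>j<n. B $$ (l, j) * a j))"
      by (subst sum.swap) (simp add: sum_distrib_left mult_ac)
    finally show ?thesis using True unfolding mact_def by simp
  qed (simp add: mact_def)
qed

lemma mact_one: "mact n (1\<^sub>m n) a = (\<lambda>i. if i < n then a i else 0)"
  unfolding mact_def by (rule ext) (simp add: if_zero_mult sum.delta)

lemma sum_mult_inverse_diag:
  assumes "A \<in> carrier_mat n n" "B \<in> carrier_mat n n" "A * B = 1\<^sub>m n" "k < n"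
  shows "(\<Sum>j<n. A $$ (k, j) * B $$ (j, k)) = (1 :: 'a :: comm_semiring_1)"
proof -
  have "(\<Sum>j<n. A $$ (k, j) * B $$ (j, k)) = (A * B) $$ (k, k)"
    using assms(1,2,4) by (simp add: mat_entry_simps)
  then show ?thesis using assms(3,4) by simp
qed

definition diagonal_of :: "nat \<Rightarrow> (nat \<Rightarrow> complex) \<Rightarrow> complex mat" where
  "diagonal_of n mu = mat n n (\<lambda>(i, j). if i = j then mu i else 0)"

lemma diagonal_of_carrier[simp]: "diagonal_of n mu \<in> carrier_mat n n"
  and dim_diagonal_of[simp]: "dim_row (diagonal_of n mu) = n" "dim_col (diagonal_of n mu) = n"
  unfolding diagonal_of_def by simp_all

lemma diagonal_of_mult: "diagonal_of n a * diagonal_of n b = diagonal_of n (\<lambda>i. a i * b i)"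
  by (rule eq_matI) (auto simp: mat_entry_simps diagonal_of_def if_zero_mult mult_if_zero sum.delta sum.delta')

lemma diagonal_of_pow: "diagonal_of n a ^\<^sub>m m = diagonal_of n (\<lambda>i. a i ^ m)"
  by (induction m) (auto simp: diagonal_of_def one_mat_def diagonal_of_mult[unfolded diagonal_of_def] mult_ac)

lemma index_mult_diagonal_of_right:
  "A \<in> carrier_mat n n \<Longrightarrow> i < n \<Longrightarrow> j < n \<Longrightarrow> (A * diagonal_of n a) $$ (i, j) = A $$ (i, j) * a j"
  by (auto simp: mat_entry_simps diagonal_of_def mult_if_zero sum.delta')

lemma index_mult_diagonal_of_left:
  "A \<in> carrier_mat n n \<Longrightarrow> i < n \<Longrightarrow> j < n \<Longrightarrow> (diagonal_of n a * A) $$ (i, j) = a i * A $$ (i, j)"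
  by (auto simp: mat_entry_simps diagonal_of_def if_zero_mult sum.delta)

lemma index_diagonal_of_sandwich:
  "X \<in> carrier_mat n n \<Longrightarrow> i < n \<Longrightarrow> j < n \<Longrightarrow>
    (diagonal_of n a * X * diagonal_of n b) $$ (i, j) = a i * X $$ (i, j) * b j"
  using index_mult_diagonal_of_right[of "diagonal_of n a * X" n i j b]
    index_mult_diagonal_of_left[of X n i j a] mult_carrier_mat[of "diagonal_of n a" n n X n] by simp

definition weight_block :: "nat \<Rightarrow> (nat \<Rightarrow> nat) \<Rightarrow> complex mat \<Rightarrow> bool" where
  "weight_block n w A \<longleftrightarrow> (\<forall>i<n. \<forall>j<n. w i \<noteq> w j \<longrightarrow> A $$ (i, j) = 0)"

lemma weight_block_mult:
  assumes "A \<in> carrier_mat n n" "B \<in> carrier_mat n n" "weight_block n w A" "weight_block n w B"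
  shows "weight_block n w (A * B)"
  unfolding weight_block_def
proof (intro allI impI)
  fix i j assume ij: "i < n" "j < n" "w i \<noteq> w j"
  have "(A * B) $$ (i, j) = (\<Sum>l<n. A $$ (i, l) * B $$ (l, j))"
    using assms ij by (simp add: mat_entry_simps)
  also have "\<dots> = 0"
  proof (rule sum.neutral, intro ballI)
    fix l assume "l \<in> {..<n}"
    then show "A $$ (i, l) * B $$ (l, j) = 0"
      using assms(3,4) ij unfolding weight_block_def by (cases "w i = w l") auto
  qed
  finally show "(A * B) $$ (i, j) = 0" .
qed

lemma weight_block_iff_commute:
  assumes "A \<in> carrier_mat n n"
  shows "weight_block n w A \<longleftrightarrow> A * diagonal_of n (\<lambda>i. of_nat (w i)) = diagonal_of n (\<lambda>i. of_nat (w i)) * A"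
proof -
  let ?D = "diagonal_of n (\<lambda>i. of_nat (w i))"
  have AD: "A * ?D = mat n n (\<lambda>(i, j). A $$ (i, j) * of_nat (w j))"
    by (intro eq_matI) (use index_mult_diagonal_of_right[OF assms] assms in auto)
  have DA: "?D * A = mat n n (\<lambda>(i, j). of_nat (w i) * A $$ (i, j))"
    by (intro eq_matI) (use index_mult_diagonal_of_left[OF assms] assms in auto)
  have "A * ?D = ?D * A \<longleftrightarrow> (\<forall>i<n. \<forall>j<n. A $$ (i, j) * of_nat (w j) = of_nat (w i) * A $$ (i, j))"
    unfolding AD DA by (auto simp: mat_eq_iff)
  also have "\<dots> \<longleftrightarrow> weight_block n w A"
    unfolding weight_block_def by (metis mult.commute mult_cancel_left of_nat_eq_iff)
  finally show ?thesis by simp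
qed

lemma weight_block_inverse:
  assumes P: "P \<in> carrier_mat n n" and Q: "Q \<in> carrier_mat n n"
    and PQ: "P * Q = 1\<^sub>m n" and QP: "Q * P = 1\<^sub>m n" and "weight_block n w P"
  shows "weight_block n w Q"
proof -
  interpret square_mat_dim n .
  let ?D = "diagonal_of n (\<lambda>i. of_nat (w i))"
  have PD: "P * ?D = ?D * P" using weight_block_iff_commute[OF P] assms(5) by simp
  have "Q * ?D = Q * ?D * (P * Q)" using Q PQ by (simp add: square_mat_simps)
  also have "\<dots> = Q * (P * ?D) * Q" using P Q PD by (simp add: square_mat_simps)
  also have "\<dots> = (Q * P) * ?D * Q" using P Q by (simp add: square_mat_simps)
  also have "\<dots> = ?D * Q" using QP Q by (simp add: square_mat_simps)
  finally show ?thesis using weight_block_iff_commute[OF Q] by simp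
qed

section \<open>Finite matrix groups\<close>

locale mat_group = square_mat_dim n for n +
  fixes G :: "complex mat set"
  assumes finite_mat_group: "finite_mat_group n G"
begin

lemma mem_carrier: "g \<in> G \<Longrightarrow> g \<in> carrier_mat n n"
  and one_mem: "1\<^sub>m n \<in> G"
  and mult_mem: "g \<in> G \<Longrightarrow> h \<in> G \<Longrightarrow> g * h \<in> G"
  and finite_group: "finite G"
  and right_inverse_ex: "g \<in> G \<Longrightarrow> \<exists>h\<in>G. g * h = 1\<^sub>m n"
  using finite_mat_group unfolding finite_mat_group_def by auto

lemma right_inverse_unique:
  assumes "g \<in> G" "h \<in> G" "h' \<in> G" "g * h = 1\<^sub>m n" "g * h' = 1\<^sub>m n"
  shows "h = h'"
proof -
  have c: "h \<in> carrier_mat n n" "g \<in> carrier_mat n n" "h' \<in> carrier_mat n n"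
    using assms mem_carrier by auto
  have "h * g = 1\<^sub>m n" using mat_mult_left_right_inverse c assms(4) by blast
  have "h = (h * g) * h'" using assms c by (simp add: square_mat_simps)
  then show ?thesis using \<open>h * g = 1\<^sub>m n\<close> c by simp
qed

lemma ginv:
  assumes "g \<in> G"
  shows "ginv n G g \<in> G" "g * ginv n G g = 1\<^sub>m n" "ginv n G g * g = 1\<^sub>m n"
proof -
  obtain h where h: "h \<in> G" "g * h = 1\<^sub>m n" using right_inverse_ex[OF assms] by blast
  have "ginv n G g = h" unfolding ginv_def
    by (rule the_equality) (use h right_inverse_unique assms in blast)+
  then show "ginv n G g \<in> G" "g * ginv n G g = 1\<^sub>m n" "ginv n G g * g = 1\<^sub>m n"
    using h mat_mult_left_right_inverse mem_carrier assms by auto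
qed

lemma ginv_eq: "g \<in> G \<Longrightarrow> h \<in> G \<Longrightarrow> g * h = 1\<^sub>m n \<Longrightarrow> ginv n G g = h"
  using right_inverse_unique ginv by blast

lemma ginv_ginv: "g \<in> G \<Longrightarrow> ginv n G (ginv n G g) = g"
  using ginv ginv_eq by blast

lemma ginv_mult:
  assumes "a \<in> G" "b \<in> G"
  shows "ginv n G (a * b) = ginv n G b * ginv n G a"
proof (rule ginv_eq)
  show "a * b \<in> G" "ginv n G b * ginv n G a \<in> G" using assms ginv mult_mem by auto
  have "a \<in> carrier_mat n n" "b \<in> carrier_mat n n" "ginv n G a \<in> carrier_mat n n"
    "ginv n G b \<in> carrier_mat n n"
    using assms ginv mem_carrier by auto
  then show "a * b * (ginv n G b * ginv n G a) = 1\<^sub>m n"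
    using assms ginv by (simp add: square_mat_simps)
qed

lemma pow_mem: "g \<in> G \<Longrightarrow> g ^\<^sub>m k \<in> G"
  by (induction k) (use mem_carrier one_mem mult_mem in auto)

lemma finite_order:
  assumes g: "g \<in> G"
  shows "\<exists>N>0. g ^\<^sub>m N = 1\<^sub>m n"
proof -
  have gc: "g \<in> carrier_mat n n" and hc: "ginv n G g \<in> carrier_mat n n"
    using mem_carrier ginv g by auto
  have "\<not> inj_on (\<lambda>k. g ^\<^sub>m k) {..card G}"
  proof
    assume "inj_on (\<lambda>k. g ^\<^sub>m k) {..card G}"
    then have "card ((\<lambda>k. g ^\<^sub>m k) ` {..card G}) = Suc (card G)" by (simp add: card_image)
    moreover have "(\<lambda>k. g ^\<^sub>m k) ` {..card G} \<subseteq> G" using pow_mem g by auto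
    ultimately have "Suc (card G) \<le> card G" using card_mono[OF finite_group] by metis
    then show False by simp
  qed
  then obtain a b where ab: "a < b" "g ^\<^sub>m a = g ^\<^sub>m b"
    unfolding inj_on_def by (metis linorder_neqE_nat)
  have cancel: "ginv n G g ^\<^sub>m m * g ^\<^sub>m m = 1\<^sub>m n" for m
  proof (induction m)
    case (Suc m)
    have "g ^\<^sub>m Suc m = g * g ^\<^sub>m m" using pow_mat_add[OF gc, of 1 m] gc by simp
    then show ?case using Suc ginv(3)[OF g] hc gc by (simp add: square_mat_simps)
  qed (use hc gc in simp)
  have "g ^\<^sub>m a = g ^\<^sub>m a * g ^\<^sub>m (b - a)" using pow_mat_add[OF gc, of a "b - a"] ab by simp
  then have "ginv n G g ^\<^sub>m a * g ^\<^sub>m a = ginv n G g ^\<^sub>m a * g ^\<^sub>m a * g ^\<^sub>m (b - a)"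
    using hc gc by (simp add: square_mat_simps)
  then have "g ^\<^sub>m (b - a) = 1\<^sub>m n" using cancel gc by simp
  then show ?thesis using ab by (intro exI[of _ "b - a"]) auto
qed

end

section \<open>Diagonalisation of matrices of finite order\<close>

lemma jordan_block_pow_eq_one:
  assumes k: "0 < k" and N: "0 < N" and eq: "jordan_block k (a :: complex) ^\<^sub>m N = 1\<^sub>m k"
  shows "k = 1"
proof (rule ccontr)
  assume "k \<noteq> 1"
  then have k2: "1 < k" using k by simp
  have "(jordan_block k a ^\<^sub>m N) $$ (0, 0) = a ^ N"
    unfolding jordan_block_pow using k by simp
  then have "a \<noteq> 0" using eq k N by (metis index_one_mat(1) power_0_left zero_neq_one less_irrefl)
  moreover have "(jordan_block k a ^\<^sub>m N) $$ (0, 1) = of_nat N * a ^ (N - 1)"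
    unfolding jordan_block_pow using k2 by simp
  then have "of_nat N * a ^ (N - 1) = 0" using eq k2 by simp
  ultimately show False using N by simp
qed

lemma jordan_matrix_Cons:
  "jordan_matrix ((k, a) # xs) = four_block_mat (jordan_block k a) (0\<^sub>m k (sum_list (map fst xs)))
     (0\<^sub>m (sum_list (map fst xs)) k) (jordan_matrix xs)"
  unfolding jordan_matrix_def by (simp add: Let_def jordan_matrix_def[symmetric])

lemma jordan_matrix_pow_Cons:
  "jordan_matrix ((k, a) # xs) ^\<^sub>m N = four_block_mat (jordan_block k a ^\<^sub>m N) (0\<^sub>m k (sum_list (map fst xs)))
     (0\<^sub>m (sum_list (map fst xs)) k) (jordan_matrix xs ^\<^sub>m N)"
  unfolding jordan_matrix_pow by (simp add: Let_def jordan_matrix_pow[symmetric])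

lemma jordan_matrix_finite_order_diagonal:
  assumes "0 \<notin> fst ` set n_as" "0 < N"
    "jordan_matrix (n_as :: (nat \<times> complex) list) ^\<^sub>m N = 1\<^sub>m (sum_list (map fst n_as))"
  shows "diagonal_mat (jordan_matrix n_as)"
  using assms
proof (induction n_as)
  case Nil then show ?case unfolding diagonal_mat_def by (simp add: jordan_matrix_def)
next
  case (Cons x xs)
  obtain k a where x: "x = (k, a)" by force
  let ?m = "sum_list (map fst xs)"
  let ?A = "jordan_block k a" and ?R = "jordan_matrix xs"
  let ?B = "four_block_mat (?A ^\<^sub>m N) (0\<^sub>m k ?m) (0\<^sub>m ?m k) (?R ^\<^sub>m N)"
  have hyp: "?B = 1\<^sub>m (k + ?m)" using Cons(4) unfolding x jordan_matrix_pow_Cons by simp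
  have k0: "0 < k" using Cons(2) x by auto
  have dims: "dim_row (?A ^\<^sub>m N) = k" "dim_col (?A ^\<^sub>m N) = k" "dim_row ?A = k" "dim_col ?A = k"
    "dim_row (?R ^\<^sub>m N) = ?m" "dim_col (?R ^\<^sub>m N) = ?m" "dim_row ?R = ?m" "dim_col ?R = ?m"
    by auto
  have "?A ^\<^sub>m N = 1\<^sub>m k"
  proof (rule eq_matI)
    fix i j assume ij: "i < dim_row (1\<^sub>m k :: complex mat)" "j < dim_col (1\<^sub>m k :: complex mat)"
    have "?B $$ (i, j) = (?A ^\<^sub>m N) $$ (i, j)"
      using ij by (subst index_mat_four_block) (auto simp: dims)
    then show "(?A ^\<^sub>m N) $$ (i, j) = 1\<^sub>m k $$ (i, j)" using hyp ij by simp
  qed auto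
  then have k1: "k = 1" using jordan_block_pow_eq_one[OF k0 Cons(3)] by simp
  have "?R ^\<^sub>m N = 1\<^sub>m ?m"
  proof (rule eq_matI)
    fix i j assume ij: "i < dim_row (1\<^sub>m ?m :: complex mat)" "j < dim_col (1\<^sub>m ?m :: complex mat)"
    have "?B $$ (k + i, k + j) = (?R ^\<^sub>m N) $$ (i, j)"
      using ij by (subst index_mat_four_block) (auto simp: dims)
    then show "(?R ^\<^sub>m N) $$ (i, j) = 1\<^sub>m ?m $$ (i, j)" using hyp ij by simp
  qed (auto simp: dims)
  then have "diagonal_mat ?R" using Cons by auto
  then show ?case unfolding x jordan_matrix_Cons diagonal_mat_def using k1 by (auto simp: dims)
qed

lemma finite_order_diagonalizable:
  assumes B: "(B :: complex mat) \<in> carrier_mat n n" and N: "0 < N" and BN: "B ^\<^sub>m N = 1\<^sub>m n"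
  shows "\<exists>P Q mu. P \<in> carrier_mat n n \<and> Q \<in> carrier_mat n n \<and> P * Q = 1\<^sub>m n \<and> Q * P = 1\<^sub>m n \<and>
     P * B = diagonal_of n mu * P"
proof -
  interpret square_mat_dim n .
  obtain as where "char_poly B = (\<Prod>a\<leftarrow>as. [:- a, 1:])" using char_poly_factorized[OF B] by blast
  then obtain n_as where jnf: "jordan_nf B n_as" using jordan_nf_exists[OF B] by blast
  let ?J = "jordan_matrix n_as"
  obtain P0 Q0 where sw: "similar_mat_wit B ?J P0 Q0"
    using jnf unfolding jordan_nf_def similar_mat_def by blast
  have c: "?J \<in> carrier_mat n n" "P0 \<in> carrier_mat n n" "Q0 \<in> carrier_mat n n"
    and PQ: "P0 * Q0 = 1\<^sub>m n" "Q0 * P0 = 1\<^sub>m n" and eqB: "B = P0 * ?J * Q0"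
    using sw B unfolding similar_mat_wit_def Let_def by auto
  have "?J ^\<^sub>m N = Q0 * (P0 * ?J ^\<^sub>m N * Q0) * P0" using PQ c by (simp add: square_mat_simps)
  also have "P0 * ?J ^\<^sub>m N * Q0 = 1\<^sub>m n" using similar_mat_wit_pow_id[OF sw] BN by simp
  finally have JN: "?J ^\<^sub>m N = 1\<^sub>m n" using PQ c by (simp add: square_mat_simps)
  have "dim_row ?J = n" using c(1) by auto
  then have "sum_list (map fst n_as) = n" by simp
  then have "diagonal_mat ?J"
    by (intro jordan_matrix_finite_order_diagonal) (use jnf N JN in \<open>auto simp: jordan_nf_def\<close>)
  then have Jd: "?J = diagonal_of n (\<lambda>i. ?J $$ (i, i))"
    using c(1) unfolding diagonal_mat_def diagonal_of_def by (intro eq_matI) auto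
  have "Q0 * B = ?J * Q0" using eqB PQ c by (simp add: square_mat_simps)
  then have "Q0 * B = diagonal_of n (\<lambda>i. ?J $$ (i, i)) * Q0" using Jd by simp
  with c PQ show ?thesis
    by (intro exI[of _ Q0] exI[of _ P0] exI[of _ "\<lambda>i. ?J $$ (i, i)"] conjI) simp_all
qed

section \<open>Eigenbases adapted to the weights\<close>

text \<open>The Jordan form of \<open>g\<close> alone gives no weight-homogeneous eigenbasis when an
  eigenvalue is shared across weights.  Instead we diagonalise \<open>g E\<close> with
  \<open>E = diag(z^w\<^sub>1, ..., z^w\<^sub>n)\<close>, \<open>z\<close> a primitive \<open>NK\<close>-th root of unity and \<open>K\<close> above all
  weights: a row eigenvector of \<open>g E\<close> with a nonzero entry in a column of weight \<open>c\<close> has an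
  eigenvalue with \<open>N\<close>-th power \<open>z^(Nc)\<close>, and these powers separate the weights.\<close>

lemma cis_root_pow_inj:
  fixes N K c c' :: nat
  assumes "0 < N" "0 < K" "c < K" "c' < K"
    and "cis (2 * pi / real (N * K)) ^ (N * c) = cis (2 * pi / real (N * K)) ^ (N * c')"
  shows "c = c'"
proof -
  have pow: "cis (2 * pi / real (N * K)) ^ (N * c) = cis (2 * pi * real c / real K)" for c
  proof -
    have "cis (2 * pi / real (N * K)) ^ (N * c) = cis (real (N * c) * (2 * pi / real (N * K)))"
      by (rule Complex.DeMoivre)
    also have "real (N * c) * (2 * pi / real (N * K)) = 2 * pi * real c / real K"
      using assms(1) by (simp add: field_simps)
    finally show ?thesis .
  qed
  have "inj_on (\<lambda>k. cis (2 * pi * real k / real K)) {..<K}"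
    using Complex.bij_betw_roots_unity[OF assms(2)] unfolding bij_betw_def by blast
  then show ?thesis using assms(3-5) unfolding pow by (auto dest: inj_onD)
qed

lemma twisted_eigenrow_weight:
  fixes g :: "complex mat"
  assumes g: "g \<in> carrier_mat n n" "weight_block n w g" "g ^\<^sub>m N = 1\<^sub>m n"
    and eigen: "\<And>j. j < n \<Longrightarrow> (\<Sum>l<n. P $$ (k, l) * g $$ (l, j)) * z ^ w j = mu * P $$ (k, j)"
    and j: "j < n" "P $$ (k, j) \<noteq> 0"
  shows "z ^ (N * w j) = mu ^ N"
proof -
  define c where "c = w j"
  define u where "u l = (if w l = c then P $$ (k, l) else 0)" for l
  have block: "g $$ (l, j') = 0" if "l < n" "j' < n" "w l \<noteq> w j'" for l j'
    using g(2) that unfolding weight_block_def by auto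
  have eigen_u: "(\<Sum>l<n. u l * g $$ (l, j')) * z ^ c = mu * u j'" if "j' < n" for j'
  proof (cases "w j' = c")
    case True
    have "(\<Sum>l<n. u l * g $$ (l, j')) = (\<Sum>l<n. P $$ (k, l) * g $$ (l, j'))"
      by (rule sum.cong) (use block that True in \<open>auto simp: u_def\<close>)
    then show ?thesis using eigen[OF that] True unfolding u_def by simp
  next
    case False
    have "(\<Sum>l<n. u l * g $$ (l, j')) = 0"
      by (rule sum.neutral) (use block that False in \<open>auto simp: u_def\<close>)
    then show ?thesis using False unfolding u_def by simp
  qed
  have "(\<Sum>l<n. u l * (g ^\<^sub>m m) $$ (l, j')) * z ^ (c * m) = mu ^ m * u j'" if "j' < n" for m j'
    using that
  proof (induction m arbitrary: j')
    case 0 then show ?case using g(1) by (simp add: mult_if_zero sum.delta')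
  next
    case (Suc m)
    have "(\<Sum>l<n. u l * (g ^\<^sub>m Suc m) $$ (l, j')) = (\<Sum>t<n. (\<Sum>l<n. u l * (g ^\<^sub>m m) $$ (l, t)) * g $$ (t, j'))"
      using g(1) Suc.prems
      by (simp add: mat_entry_simps sum_distrib_left sum_distrib_right mult_ac) (rule sum.swap)
    moreover have "z ^ (c * Suc m) = z ^ (c * m) * z ^ c" by (simp add: power_add)
    ultimately have "(\<Sum>l<n. u l * (g ^\<^sub>m Suc m) $$ (l, j')) * z ^ (c * Suc m) =
        (\<Sum>t<n. ((\<Sum>l<n. u l * (g ^\<^sub>m m) $$ (l, t)) * z ^ (c * m)) * g $$ (t, j')) * z ^ c"
      by (simp only:) (simp add: sum_distrib_right sum_distrib_left mult_ac)
    also have "\<dots> = mu ^ m * ((\<Sum>t<n. u t * g $$ (t, j')) * z ^ c)"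
      using Suc.IH by (simp add: sum_distrib_left mult_ac)
    finally show ?case using eigen_u[OF Suc.prems] by simp
  qed
  from this[OF j(1), of N] have "u j * z ^ (c * N) = mu ^ N * u j"
    using g(3) j(1) by (simp add: mult_if_zero sum.delta')
  moreover have "u j \<noteq> 0" using j unfolding u_def c_def by simp
  ultimately show ?thesis unfolding c_def by (simp add: mult.commute)
qed

lemma twisted_diagonalization:
  fixes g :: "complex mat" and z :: complex
  assumes g: "g \<in> carrier_mat n n" "weight_block n w g" and M: "0 < M" "g ^\<^sub>m M = 1\<^sub>m n"
    and z: "z ^ M = 1"
  obtains P Q mu where "P \<in> carrier_mat n n" "Q \<in> carrier_mat n n" "P * Q = 1\<^sub>m n" "Q * P = 1\<^sub>m n"
    "\<And>k j. k < n \<Longrightarrow> j < n \<Longrightarrow> (\<Sum>l<n. P $$ (k, l) * g $$ (l, j)) * z ^ w j = mu k * P $$ (k, j)"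
proof -
  interpret square_mat_dim n .
  define E where "E = diagonal_of n (\<lambda>i. z ^ w i)"
  have gE: "g * E = E * g"
  proof (rule eq_matI)
    fix i j assume "i < dim_row (E * g)" "j < dim_col (E * g)"
    then have ij: "i < n" "j < n" using g by (auto simp: E_def)
    have "(g * E) $$ (i, j) = g $$ (i, j) * z ^ w j" "(E * g) $$ (i, j) = z ^ w i * g $$ (i, j)"
      unfolding E_def using index_mult_diagonal_of_right index_mult_diagonal_of_left g(1) ij by blast+
    then show "(g * E) $$ (i, j) = (E * g) $$ (i, j)"
      using g(2) ij unfolding weight_block_def by (cases "w i = w j") auto
  qed (use g in \<open>auto simp: E_def\<close>)
  have "(z ^ w i) ^ M = 1" for i
    by (metis power_mult mult.commute z power_one)
  then have "E ^\<^sub>m M = 1\<^sub>m n"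
    unfolding E_def diagonal_of_pow unfolding diagonal_of_def by (intro eq_matI) auto
  then have "(g * E) ^\<^sub>m M = 1\<^sub>m n"
    using pow_mat_mult_commuting[OF g(1) _ gE] M(2) g(1) by (simp add: E_def)
  then obtain P Q mu where PQ: "P \<in> carrier_mat n n" "Q \<in> carrier_mat n n" "P * Q = 1\<^sub>m n"
      "Q * P = 1\<^sub>m n" "P * (g * E) = diagonal_of n mu * P"
    using finite_order_diagonalizable[of "g * E" n M] g(1) M(1) by (auto simp: E_def)
  have "(\<Sum>l<n. P $$ (k, l) * g $$ (l, j)) * z ^ w j = mu k * P $$ (k, j)" if "k < n" "j < n" for k j
  proof -
    have "P * (g * E) = P * g * E" using PQ g by (simp add: E_def square_mat_simps)
    moreover have "(P * g * E) $$ (k, j) = (P * g) $$ (k, j) * z ^ w j"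
      unfolding E_def using index_mult_diagonal_of_right[of "P * g" n k j] PQ g that by simp
    moreover have "(diagonal_of n mu * P) $$ (k, j) = mu k * P $$ (k, j)"
      using index_mult_diagonal_of_left PQ(1) that by blast
    moreover have "(P * g) $$ (k, j) = (\<Sum>l<n. P $$ (k, l) * g $$ (l, j))"
      using PQ(1) g(1) that by (simp add: mat_entry_simps)
    ultimately show ?thesis using PQ(5) by metis
  qed
  from that[OF PQ(1-4) this] show thesis .
qed

lemma finite_order_weight_eigenrows:
  fixes g :: "complex mat"
  assumes g: "g \<in> carrier_mat n n" "weight_block n w g" and N: "0 < N" "g ^\<^sub>m N = 1\<^sub>m n"
  obtains P Q rho cl where "P \<in> carrier_mat n n" "Q \<in> carrier_mat n n" "P * Q = 1\<^sub>m n" "Q * P = 1\<^sub>m n"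
    "\<And>k j. k < n \<Longrightarrow> j < n \<Longrightarrow> (\<Sum>l<n. P $$ (k, l) * g $$ (l, j)) = rho k * P $$ (k, j)"
    "\<And>k j. k < n \<Longrightarrow> j < n \<Longrightarrow> P $$ (k, j) \<noteq> 0 \<Longrightarrow> w j = cl k"
proof -
  define K where "K = Suc (Max (insert 0 (w ` {..<n})))"
  have wK: "w i < K" if "i < n" for i
    using that unfolding K_def by (simp add: le_imp_less_Suc)
  have K0: "0 < K" unfolding K_def by simp
  define z where "z = cis (2 * pi / real (N * K))"
  have "z ^ (N * K) = cis (real (N * K) * (2 * pi / real (N * K)))"
    unfolding z_def by (rule Complex.DeMoivre)
  then have z: "z ^ (N * K) = 1" "z \<noteq> 0"
    unfolding z_def using N K0 by simp_all
  obtain P0 Q0 mu where PQ0: "P0 \<in> carrier_mat n n" "Q0 \<in> carrier_mat n n" "P0 * Q0 = 1\<^sub>m n"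
      "Q0 * P0 = 1\<^sub>m n"
    and eigen: "\<And>k j. k < n \<Longrightarrow> j < n \<Longrightarrow>
      (\<Sum>l<n. P0 $$ (k, l) * g $$ (l, j)) * z ^ w j = mu k * P0 $$ (k, j)"
    using twisted_diagonalization[OF g _ _ z(1)] N K0 square_mat_dim.pow_mat_mult_exp_one[OF g(1) N(2)] by auto
  have same_weight: "w j = w j'"
    if "k < n" "j < n" "j' < n" "P0 $$ (k, j) \<noteq> 0" "P0 $$ (k, j') \<noteq> 0" for k j j'
  proof -
    have "z ^ (N * w j) = z ^ (N * w j')"
      using twisted_eigenrow_weight[OF g N(2) eigen[OF that(1)]] that by metis
    then show ?thesis using cis_root_pow_inj[OF N(1) K0 wK[OF that(2)] wK[OF that(3)]] unfolding z_def by simp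
  qed
  have row_nonzero: "\<exists>j<n. P0 $$ (k, j) \<noteq> 0" if "k < n" for k
  proof (rule ccontr)
    assume "\<not> (\<exists>j<n. P0 $$ (k, j) \<noteq> 0)"
    then have "(P0 * Q0) $$ (k, k) = 0" using PQ0(1,2) that by (simp add: mat_entry_simps)
    then show False using PQ0 that by simp
  qed
  define cl where "cl k = w (SOME j. j < n \<and> P0 $$ (k, j) \<noteq> 0)" for k
  have cl: "w j = cl k" if "k < n" "j < n" "P0 $$ (k, j) \<noteq> 0" for k j
    using someI_ex[OF row_nonzero[OF that(1)]] same_weight that unfolding cl_def by blast
  define rho where "rho k = mu k / z ^ cl k" for k
  have "(\<Sum>l<n. P0 $$ (k, l) * g $$ (l, j)) = rho k * P0 $$ (k, j)" if "k < n" "j < n" for k j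
  proof (cases "w j = cl k")
    case True
    then show ?thesis using eigen[OF that] z(2) unfolding rho_def by (simp add: field_simps)
  next
    case False
    have "P0 $$ (k, l) * g $$ (l, j) = 0" if "l < n" for l
      using cl[OF \<open>k < n\<close> that] g(2) False that \<open>j < n\<close> unfolding weight_block_def
      by (cases "P0 $$ (k, l) = 0") auto
    then have "(\<Sum>l<n. P0 $$ (k, l) * g $$ (l, j)) = 0" by (intro sum.neutral) auto
    moreover have "P0 $$ (k, j) = 0" using cl[OF that] False by blast
    ultimately show ?thesis by simp
  qed
  from that[OF PQ0(1-4) this cl] show thesis .
qed

lemma card_rows_of_weight:
  fixes P Q :: "complex mat"
  assumes PQ: "P \<in> carrier_mat n n" "Q \<in> carrier_mat n n" "P * Q = 1\<^sub>m n" "Q * P = 1\<^sub>m n"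
    and cl: "\<And>k j. k < n \<Longrightarrow> j < n \<Longrightarrow> P $$ (k, j) \<noteq> 0 \<Longrightarrow> w j = cl k"
  shows "card {k. k < n \<and> cl k = v} = card {j. j < n \<and> w j = v}"
proof -
  let ?A = "{k. k < n \<and> cl k = v}" and ?C = "{j. j < n \<and> w j = v}"
  note diag = sum_mult_inverse_diag[OF PQ(1,2,3)] sum_mult_inverse_diag[OF PQ(2,1,4)]
  have "(of_nat (card ?A) :: complex) = (\<Sum>k\<in>?A. \<Sum>j<n. P $$ (k, j) * Q $$ (j, k))"
    using diag by simp
  also have "\<dots> = (\<Sum>k\<in>?A. \<Sum>j\<in>?C. P $$ (k, j) * Q $$ (j, k))"
    by (intro sum.cong refl sum.mono_neutral_right) (use cl in auto)
  also have "\<dots> = (\<Sum>j\<in>?C. \<Sum>k\<in>?A. Q $$ (j, k) * P $$ (k, j))"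
    by (subst sum.swap) (simp add: mult.commute)
  also have "\<dots> = (\<Sum>j\<in>?C. \<Sum>k<n. Q $$ (j, k) * P $$ (k, j))"
    by (intro sum.cong refl sum.mono_neutral_left) (use cl in auto)
  also have "\<dots> = of_nat (card ?C)"
    using diag by simp
  finally show ?thesis by simp
qed

lemma count_mset_map_upt: "count (mset (map f [0..<n])) v = card {i. i < n \<and> f i = v}"
proof (induction n)
  case (Suc n)
  have "{i. i < Suc n \<and> f i = v} = {i. i < n \<and> f i = v} \<union> (if f n = v then {n} else {})"
    by (auto simp: less_Suc_eq)
  then show ?case using Suc by (auto simp: card_insert_if)
qed simp

lemma permutation_matching_counts:
  fixes n :: nat and f g :: "nat \<Rightarrow> 'a"
  assumes "\<And>v. card {k. k < n \<and> f k = v} = card {j. j < n \<and> g j = v}"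
  obtains p where "p permutes {..<n}" "\<And>i. i < n \<Longrightarrow> f (p i) = g i"
proof -
  have "mset (map g [0..<n]) = mset (map f [0..<n])"
    using assms by (intro multiset_eqI) (simp only: count_mset_map_upt)
  then obtain p where p: "p permutes {..<n}" "permute_list p (map f [0..<n]) = map g [0..<n]"
    by (metis length_map length_upt minus_nat.diff_0 mset_eq_permutation)
  have "f (p i) = g i" if "i < n" for i
    using arg_cong[OF p(2), of "\<lambda>xs. xs ! i"] permute_list_nth[of p "map f [0..<n]" i] p(1) that
      permutes_in_image[OF p(1), of i]
    by simp
  with p(1) show thesis by (rule that)
qed

lemma permute_rows_inverse:
  fixes P Q :: "complex mat"
  assumes PQ: "P \<in> carrier_mat n n" "Q \<in> carrier_mat n n" "P * Q = 1\<^sub>m n" "Q * P = 1\<^sub>m n"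
    and p: "p permutes {..<n}"
  shows "mat n n (\<lambda>(i, j). P $$ (p i, j)) * mat n n (\<lambda>(j, i). Q $$ (j, p i)) = 1\<^sub>m n"
    and "mat n n (\<lambda>(j, i). Q $$ (j, p i)) * mat n n (\<lambda>(i, j). P $$ (p i, j)) = 1\<^sub>m n"
proof -
  let ?P = "mat n n (\<lambda>(i, j). P $$ (p i, j))" and ?Q = "mat n n (\<lambda>(j, i). Q $$ (j, p i))"
  have pn: "p i < n" if "i < n" for i using permutes_in_image[OF p] that by simp
  have pinj: "p i = p i' \<longleftrightarrow> i = i'" for i i' using permutes_inj[OF p] by (auto dest: injD)
  show "?P * ?Q = 1\<^sub>m n"
  proof (rule eq_matI)
    fix i i' assume ii: "i < dim_row (1\<^sub>m n :: complex mat)" "i' < dim_col (1\<^sub>m n :: complex mat)"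
    have "(?P * ?Q) $$ (i, i') = (P * Q) $$ (p i, p i')"
      using ii PQ(1,2) pn by (simp add: mat_entry_simps)
    then show "(?P * ?Q) $$ (i, i') = 1\<^sub>m n $$ (i, i')" using PQ ii pn pinj by simp
  qed auto
  show "?Q * ?P = 1\<^sub>m n"
  proof (rule eq_matI)
    fix j j' assume jj: "j < dim_row (1\<^sub>m n :: complex mat)" "j' < dim_col (1\<^sub>m n :: complex mat)"
    have "(?Q * ?P) $$ (j, j') = (\<Sum>i<n. Q $$ (j, p i) * P $$ (p i, j'))"
      using jj pn by (simp add: mat_entry_simps)
    also have "\<dots> = (\<Sum>k<n. Q $$ (j, k) * P $$ (k, j'))"
      using sum.reindex_bij_betw[OF permutes_imp_bij[OF p], of "\<lambda>k. Q $$ (j, k) * P $$ (k, j')"] by simp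
    also have "\<dots> = (Q * P) $$ (j, j')" using jj PQ(1,2) by (simp add: mat_entry_simps)
    finally show "(?Q * ?P) $$ (j, j') = 1\<^sub>m n $$ (j, j')" using PQ by simp
  qed auto
qed

lemma eigendata_exists:
  fixes g :: "complex mat"
  assumes g: "g \<in> carrier_mat n n" "weight_block n w g" and N: "0 < N" "g ^\<^sub>m N = 1\<^sub>m n"
  shows "\<exists>D. eigendata n w g D"
proof -
  obtain P0 Q0 rho cl where PQ0: "P0 \<in> carrier_mat n n" "Q0 \<in> carrier_mat n n"
      "P0 * Q0 = 1\<^sub>m n" "Q0 * P0 = 1\<^sub>m n"
    and eigen: "\<And>k j. k < n \<Longrightarrow> j < n \<Longrightarrow> (\<Sum>l<n. P0 $$ (k, l) * g $$ (l, j)) = rho k * P0 $$ (k, j)"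
    and cl: "\<And>k j. k < n \<Longrightarrow> j < n \<Longrightarrow> P0 $$ (k, j) \<noteq> 0 \<Longrightarrow> w j = cl k"
    using finite_order_weight_eigenrows[OF g N] by blast
  have "card {k. k < n \<and> cl k = v} = card {j. j < n \<and> w j = v}" for v
    using card_rows_of_weight[OF PQ0, of w cl] cl by blast
  then obtain p where p: "p permutes {..<n}" and pw: "\<And>i. i < n \<Longrightarrow> cl (p i) = w i"
    by (rule permutation_matching_counts) blast
  have pn: "p i < n" if "i < n" for i using permutes_in_image[OF p] that by simp
  define P where "P = mat n n (\<lambda>(i, j). P0 $$ (p i, j))"
  define Q where "Q = mat n n (\<lambda>(j, i). Q0 $$ (j, p i))"
  define D where "D = mat n n (\<lambda>(i, j). if i = j then rho (p i) else 0)"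
  have Pg: "P * g = D * P"
  proof (rule eq_matI)
    fix i j assume "i < dim_row (D * P)" "j < dim_col (D * P)"
    then have ij: "i < n" "j < n" by (auto simp: D_def P_def)
    have "(P * g) $$ (i, j) = rho (p i) * P $$ (i, j)"
      using eigen[OF pn[OF ij(1)] ij(2)] ij g unfolding P_def by (simp add: mat_entry_simps)
    also have "\<dots> = (D * P) $$ (i, j)"
      using index_mult_diagonal_of_left[of P n i j "\<lambda>i. rho (p i)"] ij unfolding diagonal_of_def D_def
      by (simp add: P_def)
    finally show "(P * g) $$ (i, j) = (D * P) $$ (i, j)" .
  qed (use g in \<open>auto simp: D_def P_def\<close>)
  have "\<forall>i<n. \<forall>j<n. w i \<noteq> w j \<longrightarrow> P $$ (i, j) = 0"
    using cl pn pw unfolding P_def by (metis case_prod_conv index_mat(1))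
  then show ?thesis unfolding eigendata_def
    using permute_rows_inverse[OF PQ0 p] Pg
    by (intro exI[of _ "(P, Q, \<lambda>i. rho (p i))"]) (auto simp: P_def Q_def D_def)
qed

section \<open>Linear substitutions\<close>

definition lin_subst :: "nat \<Rightarrow> complex mat \<Rightarrow> ((nat \<Rightarrow> complex) \<Rightarrow> complex) \<Rightarrow> ((nat \<Rightarrow> complex) \<Rightarrow> complex)" where
  "lin_subst n L f = (\<lambda>b. f (mact n L b))"

definition rows_supported :: "nat \<Rightarrow> nat set \<Rightarrow> nat set \<Rightarrow> complex mat \<Rightarrow> bool" where
  "rows_supported n I J L \<longleftrightarrow> (\<forall>i\<in>J. \<forall>j<n. j \<notin> I \<longrightarrow> L $$ (i, j) = 0)"

lemma lin_subst_add: "lin_subst n L (f + g) = lin_subst n L f + lin_subst n L g"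
  unfolding lin_subst_def by (simp add: fun_eq_iff)

lemma lin_subst_fscale: "lin_subst n L (fscale c f) = fscale c (lin_subst n L f)"
  unfolding lin_subst_def fscale_def by simp

lemma lin_subst_lin_subst:
  "A \<in> carrier_mat n n \<Longrightarrow> B \<in> carrier_mat n n \<Longrightarrow> lin_subst n A (lin_subst n B f) = lin_subst n (B * A) f"
  unfolding lin_subst_def by (simp add: mact_mult)

lemma lin_subst_inverse:
  assumes "L \<in> carrier_mat n n" "M \<in> carrier_mat n n" "L * M = 1\<^sub>m n" "depends_only_on J f" "J \<subseteq> {..<n}"
  shows "lin_subst n M (lin_subst n L f) = f"
proof
  fix b
  have "f (mact n (1\<^sub>m n) b) = f b"
    by (rule assms(4)[unfolded depends_only_on_def, rule_format]) (use assms(5) in \<open>auto simp: mact_one\<close>)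
  moreover have "lin_subst n M (lin_subst n L f) = lin_subst n (L * M) f"
    by (rule lin_subst_lin_subst[OF assms(2,1)])
  ultimately show "lin_subst n M (lin_subst n L f) b = f b"
    using assms(3) by (simp add: lin_subst_def)
qed

lemma poly_fun_mact_row:
  assumes "rows_supported n I J L" "I \<subseteq> {..<n}" "i \<in> J" "J \<subseteq> {..<n}"
  shows "poly_fun I (\<lambda>b. mact n L b i)"
proof -
  have "mact n L b i = (\<Sum>l\<in>I. L $$ (i, l) * b l)" for b
  proof -
    have "mact n L b i = (\<Sum>l<n. L $$ (i, l) * b l)" using assms unfolding mact_def by auto
    also have "\<dots> = (\<Sum>l\<in>I. L $$ (i, l) * b l)"
      by (rule sum.mono_neutral_right) (use assms in \<open>auto simp: rows_supported_def\<close>)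
    finally show ?thesis .
  qed
  then show ?thesis using poly_fun_linear_form[of I "\<lambda>l. L $$ (i, l)"] finite_subset[OF assms(2)] by simp
qed

lemma poly_fun_lin_subst:
  assumes "rows_supported n I J L" "I \<subseteq> {..<n}" "J \<subseteq> {..<n}" "poly_fun J f"
  shows "poly_fun I (lin_subst n L f)"
  unfolding lin_subst_def
  by (rule poly_fun_comp[OF _ assms(4)]) (use assms poly_fun_mact_row finite_subset[OF assms(2)] in auto)

lemma mact_wscale:
  assumes "weight_block n w L"
  shows "mact n L (wscale w l b) = wscale w l (mact n L b)"
proof
  fix i show "mact n L (wscale w l b) i = wscale w l (mact n L b) i"
  proof (cases "i < n")
    case True
    have "L $$ (i, j) * (l ^ w j * b j) = l ^ w i * (L $$ (i, j) * b j)" if "j < n" for j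
      by (cases "w i = w j") (use assms True that in \<open>auto simp: weight_block_def\<close>)
    then have "(\<Sum>j<n. L $$ (i, j) * (l ^ w j * b j)) = (\<Sum>j<n. l ^ w i * (L $$ (i, j) * b j))"
      by (intro sum.cong) auto
    then show ?thesis using True unfolding mact_def wscale_def by (simp add: sum_distrib_left)
  qed (simp add: mact_def wscale_def)
qed

lemma has_charge_lin_subst:
  "weight_block n w L \<Longrightarrow> has_charge w d c f \<Longrightarrow> has_charge w d c (lin_subst n L f)"
  unfolding has_charge_def whom_def lin_subst_def by (auto simp: mact_wscale)

text \<open>Chain rule: if \<open>M\<close> inverts \<open>L\<close>, an element \<open>\<Sum>\<^sub>i r\<^sub>i \<partial>\<^sub>iF\<close> of the Jacobian ideal of \<open>F\<close>
  becomes \<open>\<Sum>\<^sub>j (\<Sum>\<^sub>i M\<^sub>j\<^sub>i r\<^sub>i\<circ>L) \<partial>\<^sub>j(F\<circ>L)\<close>.\<close>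

lemma jac_ideal_lin_subst:
  assumes I: "I \<subseteq> {..<n}" and J: "J \<subseteq> {..<n}" and L: "L \<in> carrier_mat n n" and M: "M \<in> carrier_mat n n"
    and LM: "L * M = 1\<^sub>m n" and rows: "rows_supported n I J L" and F: "poly_fun J F"
    and f: "f \<in> jac_ideal J F"
  shows "lin_subst n L f \<in> jac_ideal I (lin_subst n L F)"
proof -
  have fI: "finite I" and fJ: "finite J" using I J finite_subset by auto
  obtain r where r: "\<forall>i\<in>J. poly_fun J (r i)" "f = (\<lambda>a. \<Sum>i\<in>J. r i a * pderiv_var i F a)"
    using f unfolding jac_ideal_def by blast
  define r' where "r' j = (\<lambda>b. \<Sum>i\<in>J. M $$ (j, i) * r i (mact n L b))" for j
  have r'_poly: "poly_fun I (r' j)" for j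
    unfolding r'_def
    by (rule poly_fun_sum[OF fI fJ], rule poly_fun_mult[OF poly_fun_const])
      (use poly_fun_lin_subst[OF rows I J] r(1) in \<open>auto simp: lin_subst_def\<close>)
  have chain: "pderiv_var j (lin_subst n L F) b = (\<Sum>i\<in>J. L $$ (i, j) * pderiv_var i F (mact n L b))"
    if "j \<in> I" for j b
    unfolding lin_subst_def by (rule pderiv_var_mact[OF fJ J F]) (use that I in auto)
  have delta: "(\<Sum>j\<in>I. L $$ (i', j) * M $$ (j, i)) = (if i' = i then 1 else 0)" if "i \<in> J" "i' \<in> J" for i i'
  proof -
    have lt: "i < n" "i' < n" using that J by auto
    have "(\<Sum>j\<in>I. L $$ (i', j) * M $$ (j, i)) = (\<Sum>j<n. L $$ (i', j) * M $$ (j, i))"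
      by (rule sum.mono_neutral_left) (use that rows I in \<open>auto simp: rows_supported_def\<close>)
    also have "\<dots> = (L * M) $$ (i', i)" using lt L M by (simp add: mat_entry_simps)
    finally show ?thesis using LM lt by simp
  qed
  have "lin_subst n L f b = (\<Sum>j\<in>I. r' j b * pderiv_var j (lin_subst n L F) b)" for b
  proof -
    let ?r = "\<lambda>i. r i (mact n L b)" and ?p = "\<lambda>i. pderiv_var i F (mact n L b)"
    have "(\<Sum>j\<in>I. r' j b * pderiv_var j (lin_subst n L F) b) =
        (\<Sum>j\<in>I. (\<Sum>i\<in>J. M $$ (j, i) * ?r i) * (\<Sum>i'\<in>J. L $$ (i', j) * ?p i'))"
      unfolding r'_def by (simp add: chain)
    also have "\<dots> = (\<Sum>i\<in>J. \<Sum>i'\<in>J. ?r i * ?p i' * (\<Sum>j\<in>I. L $$ (i', j) * M $$ (j, i)))"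
      by (simp add: sum_product sum_distrib_left mult_ac) (subst sum.swap, simp add: sum.swap[of _ I])
    also have "\<dots> = (\<Sum>i\<in>J. ?r i * ?p i)"
      by (rule sum.cong[OF refl]) (simp add: delta mult_if_zero sum.delta' fJ cong: sum.cong)
    finally show ?thesis unfolding lin_subst_def r(2) by simp
  qed
  then show ?thesis unfolding jac_ideal_def using r'_poly by blast
qed

interpretation fs: vector_space fscale
  by unfold_locales (auto simp: fscale_def fun_eq_iff algebra_simps)

lemma cdim_linear_image:
  fixes T :: "((nat \<Rightarrow> complex) \<Rightarrow> complex) \<Rightarrow> ((nat \<Rightarrow> complex) \<Rightarrow> complex)"
  assumes add: "\<And>f g. T (f + g) = T f + T g" and scale: "\<And>c f. T (fscale c f) = fscale c (T f)"
    and inj: "inj_on T (fs.span S)"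
  shows "cdim (T ` S) = cdim S"
proof -
  interpret lin: module_hom fscale fscale T
    by unfold_locales (use add scale in auto)
  obtain B where B: "B \<subseteq> S" "fs.independent B" "S \<subseteq> fs.span B" "card B = fs.dim S"
    using fs.basis_exists[of S] by blast
  have span_eq: "fs.span S = fs.span B"
    using fs.span_mono[of B S] fs.span_mono[of S "fs.span B"] fs.span_span[of B] B by auto
  have injB: "inj_on T (fs.span B)" using inj span_eq by simp
  have "fs.independent (T ` B)" by (rule lin.independent_injective_image[OF B(2) injB])
  moreover have "card (T ` B) = card B"
    using card_image[OF inj_on_subset[OF injB fs.span_superset]] .
  moreover have "fs.dim (T ` S) = fs.dim (fs.span (T ` B))"
    unfolding fs.dim_span[symmetric, of "T ` S"] lin.span_image span_eq ..
  ultimately show ?thesis unfolding cdim_def using B(4) fs.dim_eq_card_independent by simp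
qed

lemma subspace_depends_only_on: "fs.subspace {f. depends_only_on J f}"
  unfolding fs.subspace_def depends_only_on_def by (auto simp: fscale_def, metis+)

lemma cdim_lin_subst_bij:
  assumes L: "L \<in> carrier_mat n n" and M: "M \<in> carrier_mat n n"
    and LM: "L * M = 1\<^sub>m n" and inv: "M * L = 1\<^sub>m n" and I: "I \<subseteq> {..<n}" and J: "J \<subseteq> {..<n}"
    and into: "\<And>f. f \<in> Y \<Longrightarrow> lin_subst n L f \<in> X" "\<And>f. f \<in> X \<Longrightarrow> lin_subst n M f \<in> Y"
    and dep: "\<And>f. f \<in> X \<Longrightarrow> depends_only_on I f" "\<And>f. f \<in> Y \<Longrightarrow> depends_only_on J f"
  shows "cdim X = cdim Y"
proof -
  have "lin_subst n L ` Y = X"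
  proof
    show "X \<subseteq> lin_subst n L ` Y"
      using lin_subst_inverse[OF M L inv dep(1) I] into(2) by (metis image_eqI subsetI)
  qed (use into(1) in auto)
  moreover have "fs.span Y \<subseteq> {f. depends_only_on J f}"
    by (rule fs.span_minimal) (use dep(2) subspace_depends_only_on in auto)
  then have "inj_on (lin_subst n L) (fs.span Y)"
    using lin_subst_inverse[OF L M LM _ J] by (metis (mono_tags, lifting) inj_onI mem_Collect_eq subsetD)
  ultimately show ?thesis using cdim_linear_image[of "lin_subst n L", OF lin_subst_add lin_subst_fscale] by metis
qed

section \<open>Matrices compatible with coordinate subspaces\<close>

definition coord_compatible :: "nat \<Rightarrow> nat set \<Rightarrow> nat set \<Rightarrow> complex mat \<Rightarrow> bool" where
  "coord_compatible n I J L \<longleftrightarrow> (\<forall>i<n. \<forall>j<n. L $$ (i, j) \<noteq> 0 \<longrightarrow> (i \<in> J \<longleftrightarrow> j \<in> I))"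

lemma coord_compatible_rows_supported:
  "coord_compatible n I J L \<Longrightarrow> J \<subseteq> {..<n} \<Longrightarrow> rows_supported n I J L"
  unfolding coord_compatible_def rows_supported_def by blast

lemma mact_restrict_coord_compatible:
  assumes "coord_compatible n I J L" "J \<subseteq> {..<n}"
  shows "(\<lambda>i. if i \<in> J then mact n L b i else 0) = mact n L (\<lambda>i. if i \<in> I then b i else 0)"
proof
  fix i
  have entry: "L $$ (i, l) * b l = (if i \<in> J then L $$ (i, l) * (if l \<in> I then b l else 0) else 0)"
    if "i < n" "l < n" "i \<in> J \<or> l \<in> I" for l
    using assms(1) that unfolding coord_compatible_def by (cases "L $$ (i, l) = 0") auto
  show "(if i \<in> J then mact n L b i else 0) = mact n L (\<lambda>i. if i \<in> I then b i else 0) i"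
  proof (cases "i < n \<and> i \<in> J")
    case True
    then show ?thesis unfolding mact_def using entry by (auto intro!: sum.cong)
  next
    case False
    have "L $$ (i, l) * (if l \<in> I then b l else 0) = 0" if "i < n" "l < n" for l
      using assms(1) False that unfolding coord_compatible_def by (cases "L $$ (i, l) = 0") auto
    then have "i < n \<Longrightarrow> (\<Sum>l<n. L $$ (i, l) * (if l \<in> I then b l else 0)) = 0"
      by (intro sum.neutral) auto
    then show ?thesis using False assms(2) unfolding mact_def by auto
  qed
qed

lemma sum_eq_coord_compatible:
  assumes I: "I \<subseteq> {..<n}" and J: "J \<subseteq> {..<n}" and L: "L \<in> carrier_mat n n" and M: "M \<in> carrier_mat n n"
    and LM: "L * M = 1\<^sub>m n" and inv: "M * L = 1\<^sub>m n"
    and cL: "coord_compatible n I J L" and cM: "coord_compatible n J I M"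
    and phi: "\<And>i j. i < n \<Longrightarrow> j < n \<Longrightarrow> M $$ (i, j) \<noteq> 0 \<Longrightarrow> phi i = phi j"
  shows "(\<Sum>x\<in>I. phi x) = (\<Sum>i\<in>J. (phi i :: complex))"
proof -
  note diag_ML = sum_mult_inverse_diag[OF M L inv] and diag_LM = sum_mult_inverse_diag[OF L M LM]
  have "(\<Sum>x\<in>I. phi x) = (\<Sum>x\<in>I. \<Sum>i<n. phi x * (M $$ (x, i) * L $$ (i, x)))"
    using I by (intro sum.cong refl) (auto simp: sum_distrib_left[symmetric] diag_ML)
  also have "\<dots> = (\<Sum>x\<in>I. \<Sum>i\<in>J. phi x * (M $$ (x, i) * L $$ (i, x)))"
    by (intro sum.cong refl sum.mono_neutral_right) (use I J cM in \<open>auto simp: coord_compatible_def\<close>)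
  also have "\<dots> = (\<Sum>x\<in>I. \<Sum>i\<in>J. phi i * (L $$ (i, x) * M $$ (x, i)))"
    by (intro sum.cong refl) (use phi I J in \<open>force simp: mult.commute\<close>)
  also have "\<dots> = (\<Sum>i\<in>J. phi i * (\<Sum>x\<in>I. L $$ (i, x) * M $$ (x, i)))"
    by (subst sum.swap) (simp add: sum_distrib_left)
  also have "\<dots> = (\<Sum>i\<in>J. phi i * (\<Sum>x<n. L $$ (i, x) * M $$ (x, i)))"
    by (intro sum.cong refl arg_cong[where f = "(*) _"] sum.mono_neutral_left)
      (use I J cL in \<open>auto simp: coord_compatible_def\<close>)
  also have "\<dots> = (\<Sum>i\<in>J. phi i)"
    using J by (intro sum.cong refl) (auto simp: diag_LM)
  finally show ?thesis .
qed

definition submat :: "nat list \<Rightarrow> nat list \<Rightarrow> 'a mat \<Rightarrow> 'a mat" where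
  "submat xs ys X = mat (length xs) (length ys) (\<lambda>(a, b). X $$ (xs ! a, ys ! b))"

lemma submat_carrier[simp]: "submat xs ys X \<in> carrier_mat (length xs) (length ys)"
  unfolding submat_def by simp

lemma submat_mult_sorted:
  fixes L X :: "complex mat"
  assumes I: "I \<subseteq> {..<n}" and L: "L \<in> carrier_mat n n" and X: "X \<in> carrier_mat n n"
    and xs: "set xs \<subseteq> {..<n}" and ys: "set ys \<subseteq> {..<n}"
    and outside: "\<And>i j x. i \<in> set xs \<Longrightarrow> j \<in> set ys \<Longrightarrow> x < n \<Longrightarrow> x \<notin> I \<Longrightarrow> L $$ (i, x) * X $$ (x, j) = 0"
  shows "submat xs (sorted_list_of_set I) L * submat (sorted_list_of_set I) ys X = submat xs ys (L * X)"
proof (rule eq_matI)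
  let ?l = "sorted_list_of_set I"
  have fI: "finite I" using I finite_subset by blast
  fix a b assume "a < dim_row (submat xs ys (L * X))" "b < dim_col (submat xs ys (L * X))"
  then have ab: "a < length xs" "b < length ys" by (auto simp: submat_def)
  then have in_set: "xs ! a \<in> set xs" "ys ! b \<in> set ys" by auto
  have "(submat xs ?l L * submat ?l ys X) $$ (a, b) = (\<Sum>c<length ?l. L $$ (xs ! a, ?l ! c) * X $$ (?l ! c, ys ! b))"
    using ab by (simp add: submat_def mat_entry_simps)
  also have "\<dots> = (\<Sum>x\<in>I. L $$ (xs ! a, x) * X $$ (x, ys ! b))"
    using fI by (intro sum.reindex_bij_betw bij_betw_nth) auto
  also have "\<dots> = (\<Sum>x<n. L $$ (xs ! a, x) * X $$ (x, ys ! b))"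
    by (rule sum.mono_neutral_left) (use I outside[OF in_set] in auto)
  also have "\<dots> = submat xs ys (L * X) $$ (a, b)"
  proof -
    have "xs ! a < n" "ys ! b < n" using in_set xs ys by auto
    then show ?thesis using ab L X by (simp add: submat_def mat_entry_simps)
  qed
  finally show "(submat xs ?l L * submat ?l ys X) $$ (a, b) = submat xs ys (L * X) $$ (a, b)" .
qed (auto simp: submat_def)

lemma det_submat_coord_compatible:
  fixes A A' L M :: "complex mat"
  assumes I: "I \<subseteq> {..<n}" and J: "J \<subseteq> {..<n}" and L: "L \<in> carrier_mat n n" and M: "M \<in> carrier_mat n n"
    and LM: "L * M = 1\<^sub>m n" and inv: "M * L = 1\<^sub>m n"
    and cL: "coord_compatible n I J L" and cM: "coord_compatible n J I M"
    and A: "A \<in> carrier_mat n n" and A': "A' \<in> carrier_mat n n" and AL: "A' * L = L * A"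
  shows "det (submat (sorted_list_of_set J) (sorted_list_of_set J) A') =
    det (submat (sorted_list_of_set I) (sorted_list_of_set I) A)"
proof -
  interpret square_mat_dim n .
  let ?lI = "sorted_list_of_set I" and ?lJ = "sorted_list_of_set J"
  have fI: "finite I" and fJ: "finite J" using I J finite_subset by auto
  have "(\<Sum>x\<in>I. (1::complex)) = (\<Sum>i\<in>J. 1)"
    by (rule sum_eq_coord_compatible[OF I J L M LM inv cL cM]) auto
  then have len: "length ?lJ = length ?lI" using fI fJ by simp
  have setI: "set ?lI \<subseteq> {..<n}" and setJ: "set ?lJ \<subseteq> {..<n}" using fI fJ I J by auto
  have L_out: "L $$ (i, x) = 0" if "i \<in> J" "x < n" "x \<notin> I" for i x
    using cL J that unfolding coord_compatible_def by blast
  have M_out: "M $$ (x, j) = 0" if "j \<in> J" "x < n" "x \<notin> I" for j x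
    using cM J that unfolding coord_compatible_def by blast
  have "A' = L * A * M"
  proof -
    have "A' = A' * L * M" using LM A' L M by (simp add: square_mat_simps)
    then show ?thesis using AL by simp
  qed
  have "submat ?lJ ?lI L * submat ?lI ?lJ M = submat ?lJ ?lJ (L * M)"
    by (rule submat_mult_sorted[OF I L M setJ setJ]) (use fJ L_out in auto)
  also have "\<dots> = 1\<^sub>m (length ?lJ)"
    using setJ LM by (intro eq_matI) (auto simp: submat_def nth_eq_iff_index_eq subset_iff)
  finally have one: "submat ?lJ ?lI L * submat ?lI ?lJ M = 1\<^sub>m (length ?lJ)" .
  have "submat ?lJ ?lI L * submat ?lI ?lI A = submat ?lJ ?lI (L * A)"
    by (rule submat_mult_sorted[OF I L A setJ setI]) (use fJ L_out in auto)
  moreover have "submat ?lJ ?lI (L * A) * submat ?lI ?lJ M = submat ?lJ ?lJ A'"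
    unfolding \<open>A' = L * A * M\<close>
    by (rule submat_mult_sorted[OF I _ M setJ setJ]) (use fJ M_out L A in auto)
  ultimately have "submat ?lJ ?lJ A' = submat ?lJ ?lI L * submat ?lI ?lI A * submat ?lI ?lJ M"
    by simp
  moreover have "submat ?lJ ?lI L \<in> carrier_mat (length ?lI) (length ?lI)"
    "submat ?lI ?lI A \<in> carrier_mat (length ?lI) (length ?lI)"
    "submat ?lI ?lJ M \<in> carrier_mat (length ?lI) (length ?lI)"
    using submat_carrier len by metis+
  ultimately show ?thesis
    using arg_cong[OF one, of det] len by (simp add: det_mult[of _ "length ?lI"])
qed

section \<open>Sectors\<close>

lemma fixidx_subset: "fixidx n w g \<subseteq> {..<n}"
  unfolding fixidx_def by auto

lemma finite_fixidx: "finite (fixidx n w g)"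
  using finite_subset[OF fixidx_subset] by blast

locale W_group = mat_group n G for n G +
  fixes w :: "nat \<Rightarrow> nat" and W :: "(nat \<Rightarrow> complex) \<Rightarrow> complex" and d :: nat
  assumes subset_G_W: "G \<subseteq> G_W n w W" and poly_fun_W: "poly_fun {..<n} W"
begin

lemma weight_block_mem: "g \<in> G \<Longrightarrow> weight_block n w g"
  and W_invariant: "g \<in> G \<Longrightarrow> W (mact n g a) = W a"
  using subset_G_W unfolding G_W_def weight_block_def by auto

abbreviation "P g \<equiv> eigP n w g"
abbreviation "Q g \<equiv> eigQ n w g"
abbreviation "lam g \<equiv> eiglam n w g"

lemma eigenbasis:
  assumes "g \<in> G"
  shows "P g \<in> carrier_mat n n" "Q g \<in> carrier_mat n n" "P g * Q g = 1\<^sub>m n" "Q g * P g = 1\<^sub>m n"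
    "P g * g = diagonal_of n (lam g) * P g" "weight_block n w (P g)" "weight_block n w (Q g)"
proof -
  obtain N where N: "0 < N" "g ^\<^sub>m N = 1\<^sub>m n" using finite_order[OF assms] by blast
  have ed: "eigendata n w g (eig n w g)"
    unfolding eig_def by (rule someI_ex[OF eigendata_exists[OF mem_carrier[OF assms] weight_block_mem[OF assms] N]])
  obtain P0 Q0 l0 where e: "eig n w g = (P0, Q0, l0)" by (cases "eig n w g") auto
  have "P g = P0" "Q g = Q0" "lam g = l0" unfolding eigP_def eigQ_def eiglam_def e by simp_all
  with ed show "P g \<in> carrier_mat n n" "Q g \<in> carrier_mat n n" "P g * Q g = 1\<^sub>m n"
    "Q g * P g = 1\<^sub>m n" "P g * g = diagonal_of n (lam g) * P g" "weight_block n w (P g)"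
    unfolding eigendata_def diagonal_of_def weight_block_def e by auto
  then show "weight_block n w (Q g)" using weight_block_inverse by blast
qed

lemma Q_diagonal:
  assumes "g \<in> G"
  shows "Q g * diagonal_of n (lam g) = g * Q g"
proof -
  note e = eigenbasis[OF assms] mem_carrier[OF assms]
  have "Q g * diagonal_of n (lam g) = Q g * (diagonal_of n (lam g) * P g) * Q g"
    using e by (simp add: square_mat_simps)
  also have "\<dots> = g * Q g" using e by (simp flip: e(5) add: square_mat_simps)
  finally show ?thesis .
qed

lemma poly_fun_Wfix:
  assumes "g \<in> G"
  shows "poly_fun (fixidx n w g) (Wfix n w W g)"
proof -
  let ?J = "fixidx n w g"
  have "poly_fun ?J (\<lambda>b. mact n (Q g) (\<lambda>i. if i \<in> ?J then b i else 0) i)" if "i \<in> {..<n}" for i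
  proof -
    have "mact n (Q g) (\<lambda>i. if i \<in> ?J then b i else 0) i = (\<Sum>l\<in>?J. Q g $$ (i, l) * b l)" for b
      using that fixidx_subset[of n w g] unfolding mact_def
      by (simp add: mult_if_zero sum.If_cases Int_absorb1)
    then show ?thesis using poly_fun_linear_form[OF finite_fixidx] by simp
  qed
  then show ?thesis unfolding Wfix_def by (rule poly_fun_comp[OF finite_fixidx poly_fun_W])
qed

text \<open>For \<open>g' = k g\<^sup>-\<^sup>1 k\<^sup>-\<^sup>1\<close> we have \<open>g' k = k g\<^sup>-\<^sup>1\<close>, so \<open>P(g') k Q(g)\<close> only connects
  eigenvectors with inverse eigenvalues: it maps the fixed coordinates of \<open>g\<close> onto those of
  \<open>g'\<close>, and substituting it identifies the sector of \<open>g'\<close> with that of \<open>g\<close>.\<close>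

definition inv_conj :: "complex mat \<Rightarrow> complex mat \<Rightarrow> complex mat" where
  "inv_conj g k = k * ginv n G g * ginv n G k"

definition sector_map :: "complex mat \<Rightarrow> complex mat \<Rightarrow> complex mat" where
  "sector_map g k = P (inv_conj g k) * k * Q g"

definition sector_map_inv :: "complex mat \<Rightarrow> complex mat \<Rightarrow> complex mat" where
  "sector_map_inv g k = P g * ginv n G k * Q (inv_conj g k)"

context
  fixes g k assumes g: "g \<in> G" and k: "k \<in> G"
begin

lemma inv_conj_mem: "inv_conj g k \<in> G"
  unfolding inv_conj_def using g k ginv mult_mem by auto

lemmas carriers = mem_carrier[OF g] mem_carrier[OF k] mem_carrier[OF inv_conj_mem] mem_carrier[OF ginv(1)[OF g]]
  mem_carrier[OF ginv(1)[OF k]] eigenbasis(1-4)[OF g] eigenbasis(1-4)[OF inv_conj_mem]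
  ginv(2,3)[OF g] ginv(2,3)[OF k]

lemma sector_map_carrier: "sector_map g k \<in> carrier_mat n n" "sector_map_inv g k \<in> carrier_mat n n"
  unfolding sector_map_def sector_map_inv_def using carriers by auto

lemma sector_map_inverse: "sector_map g k * sector_map_inv g k = 1\<^sub>m n" "sector_map_inv g k * sector_map g k = 1\<^sub>m n"
  unfolding sector_map_def sector_map_inv_def using carriers by (simp_all add: square_mat_simps)

lemma sector_map_eigen:
  "diagonal_of n (lam (inv_conj g k)) * sector_map g k * diagonal_of n (lam g) = sector_map g k"
proof -
  have "diagonal_of n (lam (inv_conj g k)) * sector_map g k * diagonal_of n (lam g) =
      (diagonal_of n (lam (inv_conj g k)) * P (inv_conj g k)) * k * (Q g * diagonal_of n (lam g))"
    unfolding sector_map_def using carriers by (simp add: square_mat_simps)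
  also have "\<dots> = (P (inv_conj g k) * inv_conj g k) * k * (g * Q g)"
    by (simp only: eigenbasis(5)[OF inv_conj_mem] Q_diagonal[OF g])
  also have "\<dots> = P (inv_conj g k) * (inv_conj g k * k * g) * Q g"
    using carriers by (simp add: square_mat_simps)
  also have "inv_conj g k * k * g = k"
    unfolding inv_conj_def using carriers by (simp add: square_mat_simps)
  finally show ?thesis unfolding sector_map_def using carriers by (simp add: square_mat_simps)
qed

lemma sector_map_inv_eigen:
  "diagonal_of n (lam g) * sector_map_inv g k * diagonal_of n (lam (inv_conj g k)) = sector_map_inv g k"
proof -
  have "diagonal_of n (lam g) * sector_map_inv g k * diagonal_of n (lam (inv_conj g k)) =
      (diagonal_of n (lam g) * P g) * ginv n G k * (Q (inv_conj g k) * diagonal_of n (lam (inv_conj g k)))"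
    unfolding sector_map_inv_def using carriers by (simp add: square_mat_simps)
  also have "\<dots> = (P g * g) * ginv n G k * (inv_conj g k * Q (inv_conj g k))"
    by (simp only: eigenbasis(5)[OF g] Q_diagonal[OF inv_conj_mem])
  also have "\<dots> = P g * (g * ginv n G k * inv_conj g k) * Q (inv_conj g k)"
    using carriers by (simp add: square_mat_simps)
  also have "g * ginv n G k * inv_conj g k = ginv n G k"
    unfolding inv_conj_def using carriers by (simp add: square_mat_simps)
  finally show ?thesis unfolding sector_map_inv_def using carriers by (simp add: square_mat_simps)
qed

lemma coord_compatible_eigen:
  assumes X: "X \<in> carrier_mat n n" and eigen: "diagonal_of n a * X * diagonal_of n b = X"
  shows "coord_compatible n {i. i < n \<and> b i = 1} {i. i < n \<and> a i = 1} X"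
  unfolding coord_compatible_def
proof (intro allI impI)
  fix i j assume ij: "i < n" "j < n" "X $$ (i, j) \<noteq> 0"
  have "X $$ (i, j) = a i * X $$ (i, j) * b j"
    using index_diagonal_of_sandwich[OF X ij(1,2), of a b] eigen by simp
  then have "a i * b j = 1" using ij(3) by (metis mult.commute mult_cancel_right1 mult.assoc)
  then show "i \<in> {i. i < n \<and> a i = 1} \<longleftrightarrow> j \<in> {i. i < n \<and> b i = 1}"
    using ij by auto
qed

lemma sector_map_coord_compatible:
  "coord_compatible n (fixidx n w g) (fixidx n w (inv_conj g k)) (sector_map g k)"
  "coord_compatible n (fixidx n w (inv_conj g k)) (fixidx n w g) (sector_map_inv g k)"
  unfolding fixidx_def
  using coord_compatible_eigen[OF sector_map_carrier(1) sector_map_eigen]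
    coord_compatible_eigen[OF sector_map_carrier(2) sector_map_inv_eigen] by simp_all

lemma sector_map_weight_block: "weight_block n w (sector_map g k)" "weight_block n w (sector_map_inv g k)"
  unfolding sector_map_def sector_map_inv_def
  using weight_block_mult carriers weight_block_mem[OF k] weight_block_mem[OF ginv(1)[OF k]]
    eigenbasis(6,7)[OF g] eigenbasis(6,7)[OF inv_conj_mem]
  by (metis mult_carrier_mat)+

lemma Wfix_lin_subst: "Wfix n w W g = lin_subst n (sector_map g k) (Wfix n w W (inv_conj g k))"
proof
  fix b
  let ?L = "sector_map g k" and ?restr = "\<lambda>b i. if i \<in> fixidx n w g then b i else 0"
  have "Q (inv_conj g k) * ?L = k * Q g"
    unfolding sector_map_def using carriers by (simp add: square_mat_simps)
  then have "mact n (Q (inv_conj g k)) (mact n ?L (?restr b)) = mact n k (mact n (Q g) (?restr b))"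
    using mact_mult[of "Q (inv_conj g k)" n ?L "?restr b"] mact_mult[of k n "Q g" "?restr b"]
      carriers sector_map_carrier by simp
  then show "Wfix n w W g b = lin_subst n ?L (Wfix n w W (inv_conj g k)) b"
    unfolding lin_subst_def Wfix_def
      mact_restrict_coord_compatible[OF sector_map_coord_compatible(1) fixidx_subset]
    using W_invariant[OF k] by simp
qed

lemma centralizer_inv_conj:
  assumes h: "h \<in> centralizer G g"
  shows "k * h * ginv n G k \<in> centralizer G (inv_conj g k)"
    "ymat n w (inv_conj g k) (k * h * ginv n G k) * sector_map g k = sector_map g k * ymat n w g h"
    "det_fix n w (inv_conj g k) (k * h * ginv n G k) = det_fix n w g h"
proof -
  have hG: "h \<in> G" and hg: "h * g = g * h" using h unfolding centralizer_def by auto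
  have hc: "h \<in> carrier_mat n n" using mem_carrier[OF hG] .
  let ?gi = "ginv n G g" and ?ki = "ginv n G k"
  have "?gi * h = ?gi * (h * g) * ?gi" using carriers hc by (simp add: square_mat_simps)
  then have hgi: "h * ?gi = ?gi * h" using hg carriers hc by (simp add: square_mat_simps)
  have "k * h * ?ki * inv_conj g k = k * (h * ?gi) * ?ki"
    unfolding inv_conj_def using carriers hc by (simp add: square_mat_simps)
  also have "\<dots> = inv_conj g k * (k * h * ?ki)"
    unfolding inv_conj_def hgi using carriers hc by (simp add: square_mat_simps)
  finally show "k * h * ?ki \<in> centralizer G (inv_conj g k)"
    unfolding centralizer_def using mult_mem hG k ginv by auto
  show conj: "ymat n w (inv_conj g k) (k * h * ?ki) * sector_map g k = sector_map g k * ymat n w g h"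
    unfolding ymat_def sector_map_def using carriers hc by (simp add: square_mat_simps)
  have det_fix_submat: "det_fix n w x h' =
      det (submat (sorted_list_of_set (fixidx n w x)) (sorted_list_of_set (fixidx n w x)) (ymat n w x h'))"
    for x h'
    unfolding det_fix_def submat_def Let_def ..
  have "ymat n w g h \<in> carrier_mat n n" "ymat n w (inv_conj g k) (k * h * ?ki) \<in> carrier_mat n n"
    unfolding ymat_def using carriers hc by auto
  then show "det_fix n w (inv_conj g k) (k * h * ?ki) = det_fix n w g h"
    unfolding det_fix_submat
    by (rule det_submat_coord_compatible[OF fixidx_subset fixidx_subset sector_map_carrier sector_map_inverse
        sector_map_coord_compatible _ _ conj])
qed

lemma Rc_lin_subst: "f \<in> Rc n w d (inv_conj g k) c \<Longrightarrow> lin_subst n (sector_map g k) f \<in> Rc n w d g c"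
  unfolding Rc_def
  using poly_fun_lin_subst[OF coord_compatible_rows_supported[OF sector_map_coord_compatible(1) fixidx_subset]
      fixidx_subset fixidx_subset] has_charge_lin_subst[OF sector_map_weight_block(1)]
  by auto

lemma jac_ideal_Wfix_lin_subst:
  "f \<in> jac_ideal (fixidx n w (inv_conj g k)) (Wfix n w W (inv_conj g k)) \<Longrightarrow>
    lin_subst n (sector_map g k) f \<in> jac_ideal (fixidx n w g) (Wfix n w W g)"
  using jac_ideal_lin_subst[OF fixidx_subset fixidx_subset sector_map_carrier sector_map_inverse(1)
      coord_compatible_rows_supported[OF sector_map_coord_compatible(1) fixidx_subset]
      poly_fun_Wfix[OF inv_conj_mem]] Wfix_lin_subst
  by simp

lemma Jc_lin_subst: "f \<in> Jc n w d W (inv_conj g k) c \<Longrightarrow> lin_subst n (sector_map g k) f \<in> Jc n w d W g c"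
  unfolding Jc_def using Rc_lin_subst jac_ideal_Wfix_lin_subst by auto

lemma InvPre_lin_subst:
  assumes f: "f \<in> InvPre n w d W G (inv_conj g k) c"
  shows "lin_subst n (sector_map g k) f \<in> InvPre n w d W G g c"
proof -
  let ?L = "sector_map g k"
  have "(\<lambda>b. det_fix n w g h * lin_subst n ?L f (mact n (ymat n w g h) b) - lin_subst n ?L f b)
      \<in> jac_ideal (fixidx n w g) (Wfix n w W g)" if h: "h \<in> centralizer G g" for h
  proof -
    let ?h' = "k * h * ginv n G k"
    note c = centralizer_inv_conj[OF h]
    have hc: "h \<in> carrier_mat n n" using h mem_carrier unfolding centralizer_def by auto
    have ym: "ymat n w g h \<in> carrier_mat n n" "ymat n w (inv_conj g k) ?h' \<in> carrier_mat n n"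
      unfolding ymat_def using carriers hc by auto
    have "mact n ?L (mact n (ymat n w g h) b) = mact n (ymat n w (inv_conj g k) ?h') (mact n ?L b)" for b
      using mact_mult[OF sector_map_carrier(1) ym(1), of b] mact_mult[OF ym(2) sector_map_carrier(1), of b] c(2)
      by simp
    then have "(\<lambda>b. det_fix n w g h * lin_subst n ?L f (mact n (ymat n w g h) b) - lin_subst n ?L f b) =
        lin_subst n ?L (\<lambda>b. det_fix n w (inv_conj g k) ?h' * f (mact n (ymat n w (inv_conj g k) ?h') b) - f b)"
      unfolding lin_subst_def c(3) by simp
    moreover have "(\<lambda>b. det_fix n w (inv_conj g k) ?h' * f (mact n (ymat n w (inv_conj g k) ?h') b) - f b)
        \<in> jac_ideal (fixidx n w (inv_conj g k)) (Wfix n w W (inv_conj g k))"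
      using f c(1) unfolding InvPre_def by auto
    ultimately show ?thesis using jac_ideal_Wfix_lin_subst by simp
  qed
  moreover have "f \<in> Rc n w d (inv_conj g k) c" using f unfolding InvPre_def by auto
  ultimately show ?thesis using Rc_lin_subst unfolding InvPre_def by auto
qed

end

lemma inv_conj_inv_conj:
  assumes g: "g \<in> G" and k: "k \<in> G"
  shows "inv_conj (inv_conj g k) (ginv n G k) = g"
proof -
  have "ginv n G (inv_conj g k) = k * g * ginv n G k"
    unfolding inv_conj_def using g k ginv ginv_mult mult_mem ginv_ginv by (simp add: assoc_mult_square_mat mem_carrier)
  then show ?thesis unfolding inv_conj_def[of "inv_conj g k"] using ginv_ginv[OF k] mem_carrier ginv g k
    by (simp add: square_mat_simps)
qed

lemma sector_map_swap:
  assumes "g \<in> G" "k \<in> G"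
  shows "sector_map (inv_conj g k) (ginv n G k) = sector_map_inv g k"
    "sector_map_inv (inv_conj g k) (ginv n G k) = sector_map g k"
  unfolding sector_map_def sector_map_inv_def inv_conj_inv_conj[OF assms] ginv_ginv[OF assms(2)] by auto

lemma Hdim_inv_conj:
  assumes g: "g \<in> G" and k: "k \<in> G"
  shows "Hdim n w d W G (inv_conj g k) c = Hdim n w d W G g c"
proof -
  have g': "inv_conj g k \<in> G" and k': "ginv n G k \<in> G" using inv_conj_mem[OF g k] ginv k by auto
  note bij = cdim_lin_subst_bij[OF sector_map_carrier[OF g k] sector_map_inverse[OF g k] fixidx_subset fixidx_subset]
  have "cdim (InvPre n w d W G g c) = cdim (InvPre n w d W G (inv_conj g k) c)"
    by (rule bij, fact InvPre_lin_subst[OF g k])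
      (use InvPre_lin_subst[OF g' k'] in \<open>auto simp: sector_map_swap[OF g k] inv_conj_inv_conj[OF g k]
        InvPre_def Rc_def intro: poly_fun_depends_only_on\<close>)
  moreover have "cdim (Jc n w d W g c) = cdim (Jc n w d W (inv_conj g k) c)"
    by (rule bij, fact Jc_lin_subst[OF g k])
      (use Jc_lin_subst[OF g' k'] in \<open>auto simp: sector_map_swap[OF g k] inv_conj_inv_conj[OF g k]
        Jc_def Rc_def intro: poly_fun_depends_only_on\<close>)
  ultimately show ?thesis unfolding Hdim_def by simp
qed

lemma shift_inv_conj:
  assumes g: "g \<in> G" and k: "k \<in> G"
  shows "shift n w d (inv_conj g k) = shift n w d g"
proof -
  have shift_eq: "shift n w d x = ((\<Sum>i<n. real (w i)) - real (\<Sum>i\<in>fixidx n w x. w i)) / real d" for x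
  proof -
    have "{i. i < n \<and> eiglam n w x i \<noteq> 1} = {..<n} - fixidx n w x" unfolding fixidx_def by auto
    then have "shift n w d x = (\<Sum>i\<in>{..<n} - fixidx n w x. real (w i)) / real d"
      unfolding shift_def by (simp add: sum_divide_distrib)
    also have "\<dots> = ((\<Sum>i<n. real (w i)) - real (\<Sum>i\<in>fixidx n w x. w i)) / real d"
      using sum_diff[OF finite_lessThan fixidx_subset[of n w x], of "\<lambda>i. real (w i)"] by simp
    finally show ?thesis .
  qed
  have "(\<Sum>i\<in>fixidx n w g. of_nat (w i)) = (\<Sum>i\<in>fixidx n w (inv_conj g k). (of_nat (w i) :: complex))"
    by (rule sum_eq_coord_compatible[OF fixidx_subset fixidx_subset sector_map_carrier[OF g k]
          sector_map_inverse[OF g k] sector_map_coord_compatible[OF g k]])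
      (use sector_map_weight_block(2)[OF g k] in \<open>auto simp: weight_block_def\<close>)
  then have "of_nat (\<Sum>i\<in>fixidx n w g. w i) = (of_nat (\<Sum>i\<in>fixidx n w (inv_conj g k). w i) :: complex)"
    by simp
  then have "(\<Sum>i\<in>fixidx n w g. w i) = (\<Sum>i\<in>fixidx n w (inv_conj g k). w i)"
    using of_nat_eq_iff by blast
  then show ?thesis unfolding shift_eq by simp
qed

lemma age_conj:
  assumes x: "x \<in> G" and k: "k \<in> G"
  shows "age (k * x * ginv n G k) = age x"
proof -
  have "similar_mat (k * x * ginv n G k) x"
    by (rule similar_matI[where n = n and P = k and Q = "ginv n G k"])
      (use mem_carrier[OF x] mem_carrier[OF k] mem_carrier[OF ginv(1)[OF k]] ginv(2,3)[OF k] in auto)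
  then show ?thesis unfolding age_def by (simp add: char_poly_similar)
qed

end

section \<open>Conjugacy classes\<close>

context mat_group
begin

lemma ginv_one: "ginv n G (1\<^sub>m n) = 1\<^sub>m n"
  by (rule ginv_eq) (auto simp: one_mem)

definition conjugate :: "complex mat \<Rightarrow> complex mat \<Rightarrow> bool" where
  "conjugate a b \<longleftrightarrow> (\<exists>k\<in>G. a = k * b * ginv n G k)"

lemma conjugate_refl:
  assumes "a \<in> G"
  shows "conjugate a a"
proof -
  have "a = 1\<^sub>m n * a * ginv n G (1\<^sub>m n)"
    unfolding ginv_one using mem_carrier[OF assms] by (simp add: square_mat_simps)
  then show ?thesis unfolding conjugate_def using one_mem by blast
qed

lemma conjugate_sym:
  assumes "a \<in> G" "b \<in> G" "conjugate a b"
  shows "conjugate b a"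
proof -
  obtain k where k: "k \<in> G" "a = k * b * ginv n G k" using assms unfolding conjugate_def by blast
  have "b = ginv n G k * a * ginv n G (ginv n G k)"
    unfolding k(2) ginv_ginv[OF k(1)] using mem_carrier ginv k(1) assms by (simp add: square_mat_simps)
  then show ?thesis unfolding conjugate_def using ginv(1)[OF k(1)] by blast
qed

lemma conjugate_trans:
  assumes "a \<in> G" "b \<in> G" "c \<in> G" "conjugate a b" "conjugate b c"
  shows "conjugate a c"
proof -
  obtain k where k: "k \<in> G" "a = k * b * ginv n G k" using assms unfolding conjugate_def by blast
  obtain l where l: "l \<in> G" "b = l * c * ginv n G l" using assms unfolding conjugate_def by blast
  have "a = (k * l) * c * ginv n G (k * l)"
    unfolding k(2) l(2) ginv_mult[OF k(1) l(1)] using mem_carrier ginv k(1) l(1) assms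
    by (simp add: square_mat_simps)
  then show ?thesis unfolding conjugate_def using mult_mem[OF k(1) l(1)] by blast
qed

lemma conj_reps_exist: "\<exists>S. conj_reps n G S"
proof -
  define rep where "rep x = (SOME y. y \<in> G \<and> conjugate x y)" for x
  have rep: "rep x \<in> G \<and> conjugate x (rep x)" if "x \<in> G" for x
    unfolding rep_def by (rule someI_ex) (use conjugate_refl that in blast)
  have rep_eq: "rep x = rep y" if "x \<in> G" "y \<in> G" "conjugate x y" for x y
  proof -
    have "{z. z \<in> G \<and> conjugate x z} = {z. z \<in> G \<and> conjugate y z}"
      using conjugate_trans conjugate_sym that by blast
    then show ?thesis unfolding rep_def by (metis (no_types, lifting) mem_Collect_eq)
  qed
  have "conj_reps n G (rep ` G)" unfolding conj_reps_def
  proof (intro conjI ballI)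
    show "rep ` G \<subseteq> G" using rep by auto
    fix g assume g: "g \<in> G"
    show "\<exists>!s. s \<in> rep ` G \<and> (\<exists>k\<in>G. g = k * s * ginv n G k)"
    proof (rule ex1I[of _ "rep g"])
      show "rep g \<in> rep ` G \<and> (\<exists>k\<in>G. g = k * rep g * ginv n G k)"
        using rep[OF g] g unfolding conjugate_def by auto
      fix s assume s: "s \<in> rep ` G \<and> (\<exists>k\<in>G. g = k * s * ginv n G k)"
      then obtain x where x: "x \<in> G" "s = rep x" by blast
      have sG: "s \<in> G" using rep x by auto
      have "rep s = rep x" using rep_eq[OF sG x(1)] conjugate_sym[OF x(1) sG] rep[OF x(1)] x(2) by simp
      moreover have "rep g = rep s" using rep_eq[OF g sG] s unfolding conjugate_def by blast
      ultimately show "s = rep g" using x(2) by simp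
    qed
  qed
  then show ?thesis ..
qed

end

context W_group
begin

definition reps :: "complex mat set" where
  "reps = (SOME S. conj_reps n G S)"

lemma conj_reps: "conj_reps n G reps"
  unfolding reps_def using conj_reps_exist by (rule someI_ex)

lemma reps_subset: "reps \<subseteq> G"
  using conj_reps unfolding conj_reps_def by auto

definition inv_rep :: "complex mat \<Rightarrow> complex mat" where
  "inv_rep s = (THE t. t \<in> reps \<and> (\<exists>k\<in>G. ginv n G s = k * t * ginv n G k))"

lemma inv_rep:
  assumes s: "s \<in> reps"
  shows "inv_rep s \<in> reps" "\<exists>k\<in>G. inv_rep s = inv_conj s k"
proof -
  have sG: "s \<in> G" using s reps_subset by auto
  have "\<exists>!t. t \<in> reps \<and> (\<exists>k\<in>G. ginv n G s = k * t * ginv n G k)"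
    using conj_reps ginv(1)[OF sG] unfolding conj_reps_def by blast
  then have t: "inv_rep s \<in> reps \<and> (\<exists>k\<in>G. ginv n G s = k * inv_rep s * ginv n G k)"
    unfolding inv_rep_def by (rule theI')
  then show "inv_rep s \<in> reps" by simp
  obtain k where k: "k \<in> G" "ginv n G s = k * inv_rep s * ginv n G k" using t by blast
  have "inv_rep s \<in> G" using t reps_subset by auto
  then have "inv_rep s = ginv n G k * ginv n G s * ginv n G (ginv n G k)"
    unfolding k(2) ginv_ginv[OF k(1)] using mem_carrier ginv k(1) by (simp add: square_mat_simps)
  then show "\<exists>k\<in>G. inv_rep s = inv_conj s k" unfolding inv_conj_def using ginv(1)[OF k(1)] by blast
qed

lemma ginv_inv_conj:
  assumes "s \<in> G" "k \<in> G"
  shows "ginv n G (inv_conj s k) = k * s * ginv n G k"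
  unfolding inv_conj_def using ginv_mult ginv_ginv mult_mem ginv assms mem_carrier
  by (simp add: assoc_mult_square_mat)

lemma inv_rep_inv_rep:
  assumes s: "s \<in> reps"
  shows "inv_rep (inv_rep s) = s"
proof -
  have sG: "s \<in> G" using s reps_subset by auto
  obtain k where k: "k \<in> G" "inv_rep s = inv_conj s k" using inv_rep(2)[OF s] by blast
  have "\<exists>!t. t \<in> reps \<and> (\<exists>k\<in>G. ginv n G (inv_rep s) = k * t * ginv n G k)"
    using conj_reps ginv(1) inv_rep(1)[OF s] reps_subset unfolding conj_reps_def by blast
  moreover have "s \<in> reps \<and> (\<exists>k\<in>G. ginv n G (inv_rep s) = k * s * ginv n G k)"
    using s k ginv_inv_conj[OF sG k(1)] by auto
  ultimately show ?thesis unfolding inv_rep_def[of "inv_rep s"] by (rule the1_equality)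
qed

definition sector_hpq :: "complex mat \<Rightarrow> real \<Rightarrow> real \<Rightarrow> nat" where
  "sector_hpq s p q =
    (if q - p = age (ginv n G s) - age s then Hdim n w d W G s (p - age s + shift n w d s) else 0)"

lemma sector_hpq_inv_rep:
  assumes s: "s \<in> reps"
  shows "sector_hpq (inv_rep s) p q = sector_hpq s q p"
proof -
  have sG: "s \<in> G" using s reps_subset by auto
  obtain k where k: "k \<in> G" "inv_rep s = inv_conj s k" using inv_rep(2)[OF s] by blast
  have age1: "age (inv_rep s) = age (ginv n G s)"
    unfolding k(2) inv_conj_def by (rule age_conj[OF ginv(1)[OF sG] k(1)])
  have age2: "age (ginv n G (inv_rep s)) = age s"
    unfolding k(2) ginv_inv_conj[OF sG k(1)] by (rule age_conj[OF sG k(1)])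
  have shift: "shift n w d (inv_rep s) = shift n w d s"
    unfolding k(2) by (rule shift_inv_conj[OF sG k(1)])
  have Hdim: "Hdim n w d W G (inv_rep s) c = Hdim n w d W G s c" for c
    unfolding k(2) by (rule Hdim_inv_conj[OF sG k(1)])
  show ?thesis
  proof (cases "q - p = age s - age (ginv n G s)")
    case True
    then have swapped: "p - q = age (ginv n G s) - age s"
      and arg: "p - age (ginv n G s) + shift n w d s = q - age s + shift n w d s" by simp_all
    show ?thesis unfolding sector_hpq_def age1 age2 shift Hdim
      by (simp only: if_P[OF True] if_P[OF swapped] arg)
  next
    case False
    then have "p - q \<noteq> age (ginv n G s) - age s" by simp
    then show ?thesis unfolding sector_hpq_def age1 age2 shift Hdim using False by simp
  qed
qed

lemma hpq_symmetric: "hpq n w d W G p q = hpq n w d W G q p"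
proof -
  have hpq: "hpq n w d W G p q = (\<Sum>s\<in>reps. sector_hpq s p q)" for p q
    unfolding hpq_def sector_hpq_def reps_def ..
  have "bij_betw inv_rep reps reps"
    by (rule bij_betwI[of _ _ _ inv_rep]) (auto simp: inv_rep inv_rep_inv_rep)
  then have "(\<Sum>s\<in>reps. sector_hpq (inv_rep s) p q) = (\<Sum>s\<in>reps. sector_hpq s p q)"
    by (rule sum.reindex_bij_betw)
  then show ?thesis unfolding hpq using sector_hpq_inv_rep by simp
qed

end

theorem corollary5p5:
  fixes n d :: nat and w :: "nat \<Rightarrow> nat" and W :: "(nat \<Rightarrow> complex) \<Rightarrow> complex"
    and G :: "complex mat set"
  assumes "quasihomogeneous n w d W"
    and "nondegenerate n W"
    and "finite_mat_group n G"
    and "G \<subseteq> G_W n w W"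
  shows "\<forall>p q :: rat. hpq n w d W G (of_rat p) (of_rat q) = hpq n w d W G (of_rat q) (of_rat p)"
proof -
  interpret W_group n G w W d
    by unfold_locales (use assms in \<open>auto simp: quasihomogeneous_def\<close>)
  show ?thesis using hpq_symmetric by blast
qed

end
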